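(* Let $(q_n),(r_n)$ be complex sequences vanishing faster than any negative power of $|n|$ as $n\to\pm\infty$ with $1-q_nr_n\neq0$ and $1+q_nr_{n+1}\ne0$ for all $n$, and let $u_n,v_n,p_n,s_n$ be as in the context. Then the (meromorphically extended) transmission coefficients $T^{(q,r)}$, $T_{\rm l}^{(u,v)}$, $T_{\rm r}^{(u,v)}$, $T_{\rm l}^{(p,s)}$, $T_{\rm r}^{(p,s)}$ have the same poles in $0<|z|<1$, each pole having the same multiplicity for all five functions. Similarly $\bar T^{(q,r)}$, $\bar T_{\rm l}^{(u,v)}$, $\bar T_{\rm r}^{(u,v)}$, $\bar T_{\rm l}^{(p,s)}$, $\bar T_{\rm r}^{(p,s)}$ have the same poles in $|z|>1$ with the same multiplicities.
   Context: System (Q): $\begin{bmatrix}\alpha_n\\ \beta_n\end{bmatrix}=\begin{bmatrix} z & (z-z^{-1})q_n\\ z r_n & z^{-1}+(z-z^{-1})q_nr_n\end{bmatrix}\begin{bmatrix}\alpha_{n+1}\\ \beta_{n+1}\end{bmatrix}$; system (U) with potentials $(a,b)$: $\begin{bmatrix}\xi_n\\ \eta_n\end{bmatrix}=\begin{bmatrix} z & z a_n\\ z^{-1}b_n & z^{-1}\end{bmatrix}\begin{bmatrix}\xi_{n+1}\\ \eta_{n+1}\end{bmatrix}$. With $D_n=\prod_{j\le n}(1-q_jr_j)$, $E_n=\prod_{j\le n}(1+q_jr_{j+1})$: $u_n=q_nE_{n-1}/D_n$, $v_n=(-r_n+r_{n+1}-q_nr_nr_{n+1})D_{n-1}/E_n$,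 $p_n=(q_n-q_{n+1}-q_nq_{n+1}r_{n+1})E_{n-1}/D_{n+1}$, $s_n=r_{n+1}D_n/E_n$. For $|z|=1$ the Jost solutions $\psi_n$, $\phi_n$, $\bar\phi_n$, $\bar\psi_n$ of each system satisfy $\psi_n=\begin{bmatrix}o(1)\\ z^n[1+o(1)]\end{bmatrix}$ as $n\to+\infty$, $\bar\psi_n=\begin{bmatrix}z^{-n}[1+o(1)]\\ o(1)\end{bmatrix}$ as $n\to+\infty$, $\phi_n=\begin{bmatrix}z^{-n}[1+o(1)]\\ o(1)\end{bmatrix}$ as $n\to-\infty$, $\bar\phi_n=\begin{bmatrix}o(1)\\ z^{n}[1+o(1)]\end{bmatrix}$ as $n\to-\infty$ (overbars are not complex conjugation). Transmission coefficients: second component of $\psi_n$ $=(1/T_{\rm l})z^n[1+o(1)]$ and first component of $\bar\psi_n$ $=(1/\bar T_{\rm l})z^{-n}[1+o(1)]$ as $n\to-\infty$; first component of $\phi_n$ $=(1/T_{\rm r})z^{-n}[1+o(1)]$ and second component of $\bar\phi_n$ $=(1/\bar T_{\rm r})z^{n}[1+o(1)]$ as $n\to+\infty$; for (Q), $T_{\rm l}=T_{\rm r}=:T^{(q,r)}$ and $\bar T_{\rm l}=\bar T_{\rm r}=:\bar T^{(q,r)}$. The unbarred transmission coefficients extend meromorphically to $|z|<1$ and the barred ones to $|z|>1$. *)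

theory Defs
  imports "HOL-Complex_Analysis.Complex_Analysis"
begin

text \<open>A discrete first-order 2x2 system  X_n = M(z,n) X_{n+1}, where the
coefficient matrix [[a,b],[c,d]] is stored as the tuple (a,b,c,d).\<close>

type_synonym system = "complex \<Rightarrow> int \<Rightarrow> complex \<times> complex \<times> complex \<times> complex"

definition is_sol :: "system \<Rightarrow> complex \<Rightarrow> (int \<Rightarrow> complex \<times> complex) \<Rightarrow> bool" where
  "is_sol M z X \<longleftrightarrow> (\<forall>n. case M z n of (a, b, c, d) \<Rightarrow>
      fst (X n) = a * fst (X (n+1)) + b * snd (X (n+1)) \<and>
      snd (X n) = c * fst (X (n+1)) + d * snd (X (n+1)))"

definition sysQ :: "(int \<Rightarrow> complex) \<Rightarrow> (int \<Rightarrow> complex) \<Rightarrow> system" where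
  "sysQ q r = (\<lambda>z n. (z, (z - inverse z) * q n, z * r n, inverse z + (z - inverse z) * q n * r n))"

definition sysU :: "(int \<Rightarrow> complex) \<Rightarrow> (int \<Rightarrow> complex) \<Rightarrow> system" where
  "sysU a b = (\<lambda>z n. (z, z * a n, inverse z * b n, inverse z))"

text \<open>For |z| = 1 these are exactly the normalisations of the
paper; the same normalisation (z^{-n} psi_n -> (0,1) as n -> +oo, etc.) defines the
analytic continuation of psi, phi into |z| < 1 and of psibar, phibar into |z| > 1.\<close>

definition jost_psi :: "system \<Rightarrow> complex \<Rightarrow> int \<Rightarrow> complex \<times> complex" where
  "jost_psi M z = (THE X. is_sol M z X \<and>
      ((\<lambda>n. z powi (-n) * fst (X n)) \<longlongrightarrow> 0) at_top \<and>
      ((\<lambda>n. z powi (-n) * snd (X n)) \<longlongrightarrow> 1) at_top)"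

definition jost_psibar :: "system \<Rightarrow> complex \<Rightarrow> int \<Rightarrow> complex \<times> complex" where
  "jost_psibar M z = (THE X. is_sol M z X \<and>
      ((\<lambda>n. z powi n * fst (X n)) \<longlongrightarrow> 1) at_top \<and>
      ((\<lambda>n. z powi n * snd (X n)) \<longlongrightarrow> 0) at_top)"

definition jost_phi :: "system \<Rightarrow> complex \<Rightarrow> int \<Rightarrow> complex \<times> complex" where
  "jost_phi M z = (THE X. is_sol M z X \<and>
      ((\<lambda>n. z powi n * fst (X n)) \<longlongrightarrow> 1) at_bot \<and>
      ((\<lambda>n. z powi n * snd (X n)) \<longlongrightarrow> 0) at_bot)"

definition jost_phibar :: "system \<Rightarrow> complex \<Rightarrow> int \<Rightarrow> complex \<times> complex" where
  "jost_phibar M z = (THE X. is_sol M z X \<and>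
      ((\<lambda>n. z powi (-n) * fst (X n)) \<longlongrightarrow> 0) at_bot \<and>
      ((\<lambda>n. z powi (-n) * snd (X n)) \<longlongrightarrow> 1) at_bot)"

definition trans_l :: "system \<Rightarrow> complex \<Rightarrow> complex" where
  "trans_l M z = 1 / Lim at_bot (\<lambda>n. z powi (-n) * snd (jost_psi M z n))"

definition trans_r :: "system \<Rightarrow> complex \<Rightarrow> complex" where
  "trans_r M z = 1 / Lim at_top (\<lambda>n. z powi n * fst (jost_phi M z n))"

definition transbar_l :: "system \<Rightarrow> complex \<Rightarrow> complex" where
  "transbar_l M z = 1 / Lim at_bot (\<lambda>n. z powi n * fst (jost_psibar M z n))"

definition transbar_r :: "system \<Rightarrow> complex \<Rightarrow> complex" where
  "transbar_r M z = 1 / Lim at_top (\<lambda>n. z powi (-n) * snd (jost_phibar M z n))"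

definition rapid_decay :: "(int \<Rightarrow> complex) \<Rightarrow> bool" where
  "rapid_decay q \<longleftrightarrow> (\<forall>k::nat.
      ((\<lambda>n. of_int \<bar>n\<bar> ^ k * q n) \<longlongrightarrow> 0) at_top \<and>
      ((\<lambda>n. of_int \<bar>n\<bar> ^ k * q n) \<longlongrightarrow> 0) at_bot)"

definition Dprod :: "(int \<Rightarrow> complex) \<Rightarrow> (int \<Rightarrow> complex) \<Rightarrow> int \<Rightarrow> complex" where
  "Dprod q r n = Lim at_bot (\<lambda>m. \<Prod>j\<in>{m..n}. 1 - q j * r j)"

definition Eprod :: "(int \<Rightarrow> complex) \<Rightarrow> (int \<Rightarrow> complex) \<Rightarrow> int \<Rightarrow> complex" where
  "Eprod q r n = Lim at_bot (\<lambda>m. \<Prod>j\<in>{m..n}. 1 + q j * r (j+1))"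

definition pot_u :: "(int \<Rightarrow> complex) \<Rightarrow> (int \<Rightarrow> complex) \<Rightarrow> int \<Rightarrow> complex" where
  "pot_u q r n = q n * Eprod q r (n-1) / Dprod q r n"

definition pot_v :: "(int \<Rightarrow> complex) \<Rightarrow> (int \<Rightarrow> complex) \<Rightarrow> int \<Rightarrow> complex" where
  "pot_v q r n = (- r n + r (n+1) - q n * r n * r (n+1)) * Dprod q r (n-1) / Eprod q r n"

definition pot_p :: "(int \<Rightarrow> complex) \<Rightarrow> (int \<Rightarrow> complex) \<Rightarrow> int \<Rightarrow> complex" where
  "pot_p q r n = (q n - q (n+1) - q n * q (n+1) * r (n+1)) * Eprod q r (n-1) / Dprod q r (n+1)"

definition pot_s :: "(int \<Rightarrow> complex) \<Rightarrow> (int \<Rightarrow> complex) \<Rightarrow> int \<Rightarrow> complex" where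
  "pot_s q r n = r (n+1) * Dprod q r n / Eprod q r n"

end

theory Submission
  imports Defs
begin

text \<open>After scaling by \<open>z\<^sup>\<plusminus>\<^sup>n\<close>, the one-step matrices of (Q) are summable
  perturbations of diagonal matrices with entries in the closed unit disc. A Volterra-type
  iteration then gives, for every \<open>0 < |z| \<le> 1\<close> (resp. \<open>|z| \<ge> 1\<close>), a unique solution with
  prescribed behaviour at \<open>+\<infinity>\<close>, which stays bounded at \<open>-\<infinity>\<close> and has a convergent
  component there; solutions normalised at \<open>-\<infinity>\<close> are obtained by reversing the index.
  The products \<open>D\<^sub>n\<close>, \<open>E\<^sub>n\<close> converge to nonzero limits at \<open>\<plusminus>\<infinity>\<close>, and explicit matrices
  \<open>G\<^sub>n\<close> with \<open>G\<^sub>n Q\<^sub>n = U\<^sub>n G\<^sub>n\<^sub>+\<^sub>1\<close> carry Jost solutions of (Q) to those of the two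
  (U)-systems. Since \<open>G\<^sub>n\<close> has diagonal limits at \<open>\<plusminus>\<infinity>\<close>, every transmission coefficient
  of a (U)-system is a nonzero constant (a ratio of limits of \<open>D\<close> and \<open>E\<close>) times the
  corresponding one of (Q), whose left and right coefficients agree because \<open>det Q\<^sub>n = 1\<close>
  makes the Wronskian constant. Multiplying by a nonzero constant preserves poles and
  their orders.\<close>

section \<open>Two-by-two matrices\<close>

type_synonym vec2 = "complex \<times> complex"

type_synonym mat2 = "complex \<times> complex \<times> complex \<times> complex"

definition m11 :: "mat2 \<Rightarrow> complex" where "m11 A = fst A"

definition m12 :: "mat2 \<Rightarrow> complex" where "m12 A = fst (snd A)"

definition m21 :: "mat2 \<Rightarrow> complex" where "m21 A = fst (snd (snd A))"

definition m22 :: "mat2 \<Rightarrow> complex" where "m22 A = snd (snd (snd A))"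

lemma mat_entries [simp]: "m11 (a, b, c, d) = a" "m12 (a, b, c, d) = b" "m21 (a, b, c, d) = c" "m22 (a, b, c, d) = d"
  by (simp_all add: m11_def m12_def m21_def m22_def)

definition mat_vec :: "mat2 \<Rightarrow> vec2 \<Rightarrow> vec2" where
  "mat_vec A v = (m11 A * fst v + m12 A * snd v, m21 A * fst v + m22 A * snd v)"

definition mat_mult :: "mat2 \<Rightarrow> mat2 \<Rightarrow> mat2" where
  "mat_mult A B = (m11 A * m11 B + m12 A * m21 B, m11 A * m12 B + m12 A * m22 B,
                   m21 A * m11 B + m22 A * m21 B, m21 A * m12 B + m22 A * m22 B)"

definition diag :: "complex \<Rightarrow> complex \<Rightarrow> mat2" where "diag a b = (a, 0, 0, b)"

definition vec_scale :: "complex \<Rightarrow> vec2 \<Rightarrow> vec2" where "vec_scale c v = (c * fst v, c * snd v)"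

definition mat_scale :: "complex \<Rightarrow> mat2 \<Rightarrow> mat2" where
  "mat_scale c A = (c * m11 A, c * m12 A, c * m21 A, c * m22 A)"

definition mat_det :: "mat2 \<Rightarrow> complex" where "mat_det A = m11 A * m22 A - m12 A * m21 A"

definition mat_inv :: "mat2 \<Rightarrow> mat2" where
  "mat_inv A = mat_scale (1 / mat_det A) (m22 A, - m12 A, - m21 A, m11 A)"

lemma mat_vec_mult: "mat_vec (mat_mult A B) v = mat_vec A (mat_vec B v)"
  by (simp add: mat_vec_def mat_mult_def algebra_simps)

lemma mat_vec_diag [simp]: "mat_vec (diag a b) v = (a * fst v, b * snd v)"
  by (simp add: mat_vec_def diag_def)

lemma mat_vec_mat_scale: "mat_vec (mat_scale c A) v = vec_scale c (mat_vec A v)"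
  by (simp add: mat_vec_def vec_scale_def mat_scale_def algebra_simps)

lemma mat_vec_vec_scale: "mat_vec A (vec_scale c v) = vec_scale c (mat_vec A v)"
  by (simp add: mat_vec_def vec_scale_def algebra_simps)

lemma vec_scale_vec_scale [simp]: "vec_scale a (vec_scale b v) = vec_scale (a * b) v"
  by (simp add: vec_scale_def)

lemma vec_scale_1 [simp]: "vec_scale 1 v = v"
  by (simp add: vec_scale_def)

lemma vec_scale_eq_iff: "c \<noteq> 0 \<Longrightarrow> vec_scale c u = vec_scale c v \<longleftrightarrow> u = v"
  by (auto simp: vec_scale_def prod_eq_iff)

lemma mat_mult_assoc: "mat_mult (mat_mult A B) C = mat_mult A (mat_mult B C)"
  by (simp add: mat_mult_def algebra_simps)

lemma mat_mult_diag_1 [simp]: "mat_mult (diag 1 1) A = A" "mat_mult A (diag 1 1) = A"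
  by (cases A; simp add: mat_mult_def diag_def)+

lemma mat_inv_mult:
  assumes "mat_det A \<noteq> 0"
  shows "mat_mult (mat_inv A) A = diag 1 1" "mat_mult A (mat_inv A) = diag 1 1"
proof -
  obtain a b c d where A: "A = (a, b, c, d)" by (cases A) auto
  have "a * d - b * c \<noteq> 0" using assms by (simp add: A mat_det_def)
  then show "mat_mult (mat_inv A) A = diag 1 1" "mat_mult A (mat_inv A) = diag 1 1"
    by (simp_all add: A mat_inv_def mat_mult_def mat_scale_def mat_det_def diag_def
        diff_divide_distrib[symmetric] add_divide_distrib[symmetric] mult.commute)
qed

lemma mat_vec_inv_cancel:
  assumes "mat_det A \<noteq> 0"
  shows "mat_vec (mat_inv A) (mat_vec A v) = v" "mat_vec A (mat_vec (mat_inv A) v) = v"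
  by (simp_all add: mat_vec_mult[symmetric] mat_inv_mult[OF assms])

lemma mat_det_scale: "mat_det (mat_scale c A) = c\<^sup>2 * mat_det A"
  by (simp add: mat_det_def mat_scale_def power2_eq_square algebra_simps)

lemma mat_det_inv: "mat_det (mat_inv A) = 1 / mat_det A"
proof -
  have "mat_det (m22 A, - m12 A, - m21 A, m11 A) = mat_det A"
    by (simp add: mat_det_def mult.commute)
  then show ?thesis by (simp add: mat_inv_def mat_det_scale power2_eq_square)
qed

lemma mat_det_diag [simp]: "mat_det (diag a b) = a * b"
  by (simp add: mat_det_def diag_def)

lemma tendsto_mat_entries:
  assumes "(A \<longlongrightarrow> A0) F"
  shows "((\<lambda>n. m11 (A n)) \<longlongrightarrow> m11 A0) F" "((\<lambda>n. m12 (A n)) \<longlongrightarrow> m12 A0) F"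
    "((\<lambda>n. m21 (A n)) \<longlongrightarrow> m21 A0) F" "((\<lambda>n. m22 (A n)) \<longlongrightarrow> m22 A0) F"
  unfolding m11_def m12_def m21_def m22_def by (intro tendsto_intros assms)+

lemma tendsto_mat_vec [tendsto_intros]:
  assumes "(A \<longlongrightarrow> A0) F" "(v \<longlongrightarrow> v0) F"
  shows "((\<lambda>n. mat_vec (A n) (v n)) \<longlongrightarrow> mat_vec A0 v0) F"
  unfolding mat_vec_def by (intro tendsto_intros tendsto_mat_entries assms)

lemma tendsto_vec_scale [tendsto_intros]:
  assumes "(c \<longlongrightarrow> c0) F" "(v \<longlongrightarrow> v0) F"
  shows "((\<lambda>n. vec_scale (c n) (v n)) \<longlongrightarrow> vec_scale c0 v0) F"
  unfolding vec_scale_def by (intro tendsto_intros assms)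

lemma tendsto_mat_inv [tendsto_intros]:
  assumes "(A \<longlongrightarrow> A0) F" "mat_det A0 \<noteq> 0"
  shows "((\<lambda>n. mat_inv (A n)) \<longlongrightarrow> mat_inv A0) F"
  using assms(2) unfolding mat_inv_def mat_scale_def mat_det_def
  by (intro tendsto_intros tendsto_mat_entries assms(1)) auto

lemma bounded_linear_mat_vec: "bounded_linear (mat_vec A)"
  unfolding linear_conv_bounded_linear[symmetric]
  by (rule linearI) (simp_all add: mat_vec_def scaleR_conv_of_real algebra_simps)

lemma norm_vec_scale_fst: "cmod (c * fst v) \<le> norm (vec_scale c v)"
  and norm_vec_scale_snd: "cmod (c * snd v) \<le> norm (vec_scale c v)"
  by (simp_all add: vec_scale_def norm_fst_le norm_snd_le)

definition dist_diag :: "mat2 \<Rightarrow> complex \<Rightarrow> complex \<Rightarrow> real" where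
  "dist_diag A d1 d2 = cmod (m11 A - d1) + cmod (m12 A) + cmod (m21 A) + cmod (m22 A - d2)"

lemma norm_mat_vec_le_dist_diag:
  assumes "cmod d1 \<le> 1" "cmod d2 \<le> 1"
  shows "norm (mat_vec A v) \<le> (1 + dist_diag A d1 d2) * norm v"
proof -
  define B where "B = (m11 A - d1, m12 A, m21 A, m22 A - d2)"
  have split: "mat_vec A v = mat_vec (diag d1 d2) v + mat_vec B v"
    by (simp add: B_def mat_vec_def diag_def algebra_simps)
  have "(cmod d1 * cmod (fst v))\<^sup>2 + (cmod d2 * cmod (snd v))\<^sup>2 \<le> (cmod (fst v))\<^sup>2 + (cmod (snd v))\<^sup>2"
    using assms by (intro add_mono power_mono) (auto intro: mult_left_le_one_le)
  then have diag_le: "norm (mat_vec (diag d1 d2) v) \<le> norm v"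
    by (cases v) (simp add: norm_Pair norm_mult)
  have "norm (mat_vec B v) \<le> cmod (m11 B * fst v + m12 B * snd v) + cmod (m21 B * fst v + m22 B * snd v)"
    unfolding mat_vec_def by (rule norm_Pair_le)
  also have "\<dots> \<le> (cmod (m11 B) * cmod (fst v) + cmod (m12 B) * cmod (snd v)) +
      (cmod (m21 B) * cmod (fst v) + cmod (m22 B) * cmod (snd v))"
    by (intro add_mono order_trans[OF norm_triangle_ineq]) (simp_all add: norm_mult)
  also have "\<dots> \<le> (cmod (m11 B) * norm v + cmod (m12 B) * norm v) + (cmod (m21 B) * norm v + cmod (m22 B) * norm v)"
    using norm_fst_le[of "fst v" "snd v"] norm_snd_le[of "snd v" "fst v"]
    by (intro add_mono mult_left_mono) simp_all
  also have "\<dots> = dist_diag A d1 d2 * norm v"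
    by (simp add: B_def dist_diag_def algebra_simps)
  finally show ?thesis
    using diag_le norm_triangle_ineq[of "mat_vec (diag d1 d2) v" "mat_vec B v"]
    by (simp add: split algebra_simps)
qed

lemma dist_diag_fst:
  shows "norm (mat_vec A (1, 0) - (1, 0)) \<le> dist_diag A 1 d2"
    and "cmod (fst (mat_vec A v) - fst v) \<le> dist_diag A 1 d2 * norm v"
proof -
  have "norm (mat_vec A (1, 0) - (1, 0)) = norm (m11 A - 1, m21 A)"
    by (simp add: mat_vec_def)
  then show "norm (mat_vec A (1, 0) - (1, 0)) \<le> dist_diag A 1 d2"
    using norm_Pair_le[of "m11 A - 1" "m21 A"] norm_ge_zero[of "m12 A"] norm_ge_zero[of "m22 A - d2"]
    unfolding dist_diag_def by linarith
  have "cmod (fst (mat_vec A v) - fst v) = cmod ((m11 A - 1) * fst v + m12 A * snd v)"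
    by (simp add: mat_vec_def algebra_simps)
  also have "\<dots> \<le> cmod (m11 A - 1) * norm v + cmod (m12 A) * norm v"
    using norm_fst_le[of "fst v" "snd v"] norm_snd_le[of "snd v" "fst v"]
    by (intro order_trans[OF norm_triangle_ineq] add_mono) (simp_all add: norm_mult mult_left_mono)
  also have "\<dots> \<le> dist_diag A 1 d2 * norm v"
    by (simp add: dist_diag_def algebra_simps mult_right_mono)
  finally show "cmod (fst (mat_vec A v) - fst v) \<le> dist_diag A 1 d2 * norm v" .
qed

lemma dist_diag_snd:
  shows "norm (mat_vec A (0, 1) - (0, 1)) \<le> dist_diag A d1 1"
    and "cmod (snd (mat_vec A v) - snd v) \<le> dist_diag A d1 1 * norm v"
proof -
  have "norm (mat_vec A (0, 1) - (0, 1)) = norm (m12 A, m22 A - 1)"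
    by (simp add: mat_vec_def)
  then show "norm (mat_vec A (0, 1) - (0, 1)) \<le> dist_diag A d1 1"
    using norm_Pair_le[of "m12 A" "m22 A - 1"] norm_ge_zero[of "m11 A - d1"] norm_ge_zero[of "m21 A"]
    unfolding dist_diag_def by linarith
  have "cmod (snd (mat_vec A v) - snd v) = cmod (m21 A * fst v + (m22 A - 1) * snd v)"
    by (simp add: mat_vec_def algebra_simps)
  also have "\<dots> \<le> cmod (m21 A) * norm v + cmod (m22 A - 1) * norm v"
    using norm_fst_le[of "fst v" "snd v"] norm_snd_le[of "snd v" "fst v"]
    by (intro order_trans[OF norm_triangle_ineq] add_mono) (simp_all add: norm_mult mult_left_mono)
  also have "\<dots> \<le> dist_diag A d1 1 * norm v"
    by (simp add: dist_diag_def algebra_simps mult_right_mono)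
  finally show "cmod (snd (mat_vec A v) - snd v) \<le> dist_diag A d1 1 * norm v" .
qed

definition vec_det :: "vec2 \<Rightarrow> vec2 \<Rightarrow> complex" where
  "vec_det u v = fst u * snd v - snd u * fst v"

lemma vec_det_mat_vec: "vec_det (mat_vec A u) (mat_vec A v) = mat_det A * vec_det u v"
  by (simp add: vec_det_def mat_vec_def mat_det_def algebra_simps)

lemma tendsto_at_top_int_iff:
  fixes f :: "int \<Rightarrow> 'a::topological_space"
  shows "(f \<longlongrightarrow> L) at_top \<longleftrightarrow> ((\<lambda>k. f (n0 + int k)) \<longlongrightarrow> L) sequentially"
proof
  assume "(f \<longlongrightarrow> L) at_top"
  moreover have "filterlim (\<lambda>k::nat. n0 + int k) at_top sequentially"
    unfolding filterlim_at_top
  proof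
    fix C :: int
    show "eventually (\<lambda>k. C \<le> n0 + int k) sequentially"
      using eventually_ge_at_top[of "nat (C - n0)"] by eventually_elim linarith
  qed
  ultimately show "((\<lambda>k. f (n0 + int k)) \<longlongrightarrow> L) sequentially"
    by (rule filterlim_compose)
next
  assume "((\<lambda>k. f (n0 + int k)) \<longlongrightarrow> L) sequentially"
  moreover have "filterlim (\<lambda>n::int. nat (n - n0)) sequentially at_top"
    unfolding filterlim_at_top
  proof
    fix k :: nat
    show "eventually (\<lambda>n. k \<le> nat (n - n0)) at_top"
      using eventually_ge_at_top[of "n0 + int k"] by eventually_elim linarith
  qed
  ultimately have "((\<lambda>n. f (n0 + int (nat (n - n0)))) \<longlongrightarrow> L) at_top"
    by (rule filterlim_compose)
  moreover have "eventually (\<lambda>n. f (n0 + int (nat (n - n0))) = f n) at_top"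
    using eventually_ge_at_top[of n0] by eventually_elim auto
  ultimately show "(f \<longlongrightarrow> L) at_top"
    by (rule Lim_transform_eventually)
qed

lemma tendsto_at_bot_mirror:
  fixes f :: "int \<Rightarrow> 'a::topological_space"
  shows "(f \<longlongrightarrow> L) at_bot \<longleftrightarrow> ((\<lambda>m. f (- m)) \<longlongrightarrow> L) at_top"
  by (simp add: at_bot_mirror filterlim_filtermap)

lemma eventually_at_bot_mirror:
  fixes P :: "int \<Rightarrow> bool"
  shows "eventually P at_bot \<longleftrightarrow> eventually (\<lambda>m. P (- m)) at_top"
  by (simp add: at_bot_mirror eventually_filtermap)

lemma tendsto_at_bot_int_iff:
  fixes f :: "int \<Rightarrow> 'a::topological_space"
  shows "(f \<longlongrightarrow> L) at_bot \<longleftrightarrow> ((\<lambda>k. f (n0 - int k)) \<longlongrightarrow> L) sequentially"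
  unfolding tendsto_at_bot_mirror tendsto_at_top_int_iff[of _ _ "- n0"] by simp

lemma tendsto_shift_at_top:
  fixes f :: "int \<Rightarrow> 'a::topological_space"
  shows "((\<lambda>n. f (n + c)) \<longlongrightarrow> L) at_top \<longleftrightarrow> (f \<longlongrightarrow> L) at_top"
  using tendsto_at_top_int_iff[of "\<lambda>n. f (n + c)" _ 0] tendsto_at_top_int_iff[of f _ c]
  by (simp add: add.commute)

lemma tendsto_shift_at_bot:
  fixes f :: "int \<Rightarrow> 'a::topological_space"
  shows "((\<lambda>n. f (n + c)) \<longlongrightarrow> L) at_bot \<longleftrightarrow> (f \<longlongrightarrow> L) at_bot"
  using tendsto_at_bot_int_iff[of "\<lambda>n. f (n + c)" _ 0] tendsto_at_bot_int_iff[of f _ c]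
  by (simp add: algebra_simps)

lemma tendsto_Pair_iff: "((\<lambda>n. (f n, g n)) \<longlongrightarrow> (a, b)) F \<longleftrightarrow> (f \<longlongrightarrow> a) F \<and> (g \<longlongrightarrow> b) F"
  using tendsto_fst[of "\<lambda>n. (f n, g n)" "(a, b)" F] tendsto_snd[of "\<lambda>n. (f n, g n)" "(a, b)" F]
  by (auto intro: tendsto_Pair)

lemma tendsto_mult_zero_bounded:
  fixes f g :: "'a \<Rightarrow> complex"
  assumes "(f \<longlongrightarrow> 0) F" "eventually (\<lambda>n. cmod (g n) \<le> C) F"
  shows "((\<lambda>n. f n * g n) \<longlongrightarrow> 0) F"
proof (rule tendsto_0_le[OF assms(1), of _ C])
  show "eventually (\<lambda>n. norm (f n * g n) \<le> norm (f n) * C) F"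
    using assms(2) by eventually_elim (simp add: norm_mult mult_left_mono)
qed

lemma tendsto_mat_vec_diag:
  assumes G: "(G \<longlongrightarrow> diag a b) F" and bounded: "eventually (\<lambda>n. norm (vec_scale (\<sigma> n) (X n)) \<le> C) F"
  shows "((\<lambda>n. \<sigma> n * fst (X n)) \<longlongrightarrow> L) F \<Longrightarrow> ((\<lambda>n. \<sigma> n * fst (mat_vec (G n) (X n))) \<longlongrightarrow> a * L) F"
    and "((\<lambda>n. \<sigma> n * snd (X n)) \<longlongrightarrow> L) F \<Longrightarrow> ((\<lambda>n. \<sigma> n * snd (mat_vec (G n) (X n))) \<longlongrightarrow> b * L) F"
proof -
  note entries = tendsto_mat_entries[OF G, unfolded diag_def mat_entries]
  have "eventually (\<lambda>n. cmod (\<sigma> n * fst (X n)) \<le> C) F" "eventually (\<lambda>n. cmod (\<sigma> n * snd (X n)) \<le> C) F"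
    using bounded by (auto elim!: eventually_mono intro: order_trans[OF norm_vec_scale_fst] order_trans[OF norm_vec_scale_snd])
  then have off_diag: "((\<lambda>n. m21 (G n) * (\<sigma> n * fst (X n))) \<longlongrightarrow> 0) F"
      "((\<lambda>n. m12 (G n) * (\<sigma> n * snd (X n))) \<longlongrightarrow> 0) F"
    by (auto intro: tendsto_mult_zero_bounded entries(2,3))
  have components: "\<sigma> n * fst (mat_vec (G n) (X n)) = m11 (G n) * (\<sigma> n * fst (X n)) + m12 (G n) * (\<sigma> n * snd (X n))"
    "\<sigma> n * snd (mat_vec (G n) (X n)) = m22 (G n) * (\<sigma> n * snd (X n)) + m21 (G n) * (\<sigma> n * fst (X n))" for n
    by (simp_all add: mat_vec_def algebra_simps)
  show "((\<lambda>n. \<sigma> n * fst (mat_vec (G n) (X n))) \<longlongrightarrow> a * L) F" if "((\<lambda>n. \<sigma> n * fst (X n)) \<longlongrightarrow> L) F"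
  proof -
    have "((\<lambda>n. m11 (G n) * (\<sigma> n * fst (X n)) + m12 (G n) * (\<sigma> n * snd (X n))) \<longlongrightarrow> a * L + 0) F"
      by (intro tendsto_add tendsto_mult entries(1) that off_diag(2))
    then show ?thesis
      unfolding components by simp
  qed
  show "((\<lambda>n. \<sigma> n * snd (mat_vec (G n) (X n))) \<longlongrightarrow> b * L) F" if "((\<lambda>n. \<sigma> n * snd (X n)) \<longlongrightarrow> L) F"
  proof -
    have "((\<lambda>n. m22 (G n) * (\<sigma> n * snd (X n)) + m21 (G n) * (\<sigma> n * fst (X n))) \<longlongrightarrow> b * L + 0) F"
      by (intro tendsto_add tendsto_mult entries(4) that off_diag(1))
    then show ?thesis
      unfolding components by simp
  qed
qed

section \<open>Summably bounded linear recurrences\<close>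

definition solves :: "(int \<Rightarrow> 'a \<Rightarrow> 'a) \<Rightarrow> (int \<Rightarrow> 'a) \<Rightarrow> bool" where
  "solves T X \<longleftrightarrow> (\<forall>n. X n = T n (X (n + 1)))"

fun propagate :: "(int \<Rightarrow> 'a \<Rightarrow> 'a) \<Rightarrow> int \<Rightarrow> nat \<Rightarrow> 'a \<Rightarrow> 'a" where
  "propagate T n 0 v = v"
| "propagate T n (Suc k) v = T n (propagate T (n + 1) k v)"

lemma solves_propagate: "solves T X \<Longrightarrow> X n = propagate T n k (X (n + int k))"
proof (induction k arbitrary: n)
  case (Suc k)
  then have "X n = T n (propagate T (n + 1) k (X (n + 1 + int k)))"
    unfolding solves_def by metis
  then show ?case by (simp add: add_ac)
qed simp

locale summably_bounded =
  fixes T :: "int \<Rightarrow> 'a::banach \<Rightarrow> 'a" and w :: "int \<Rightarrow> real"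
  assumes T_bounded_linear: "\<And>n. bounded_linear (T n)"
    and norm_le: "\<And>n v. norm (T n v) \<le> (1 + w n) * norm v"
    and w_nonneg: "\<And>n. w n \<ge> 0"
    and summable_top: "\<And>n. summable (\<lambda>i. w (n + int i))"
    and summable_bot: "\<And>n. summable (\<lambda>i. w (n - int i))"
begin

lemma T_diff: "T n (u - v) = T n u - T n v"
  by (rule linear_diff[OF bounded_linear.linear[OF T_bounded_linear]])

lemma T_add: "T n (u + v) = T n u + T n v"
  by (rule linear_add[OF bounded_linear.linear[OF T_bounded_linear]])

lemma norm_propagate_le: "norm (propagate T n k v) \<le> exp (\<Sum>i<k. w (n + int i)) * norm v"
proof (induction k arbitrary: n)
  case (Suc k)
  have "norm (propagate T n (Suc k) v) \<le> (1 + w n) * norm (propagate T (n + 1) k v)"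
    using norm_le by simp
  also have "\<dots> \<le> (1 + w n) * (exp (\<Sum>i<k. w (n + 1 + int i)) * norm v)"
    by (intro mult_left_mono Suc) (use w_nonneg[of n] in simp)
  also have "\<dots> \<le> exp (w n) * (exp (\<Sum>i<k. w (n + 1 + int i)) * norm v)"
    by (intro mult_right_mono) (auto simp: add.commute exp_ge_add_one_self)
  also have "\<dots> = exp (\<Sum>i<Suc k. w (n + int i)) * norm v"
    by (subst sum.lessThan_Suc_shift) (simp add: exp_add add_ac)
  finally show ?case .
qed simp

definition tail :: "int \<Rightarrow> real" where "tail n = (\<Sum>i. w (n + int i))"

lemma tail_nonneg: "tail n \<ge> 0"
  unfolding tail_def by (intro suminf_nonneg summable_top w_nonneg)

lemma norm_propagate_le_tail: "norm (propagate T n k v) \<le> exp (tail n) * norm v"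
proof -
  have "(\<Sum>i<k. w (n + int i)) \<le> tail n"
    unfolding tail_def by (intro sum_le_suminf summable_top w_nonneg) auto
  then show ?thesis
    by (intro order_trans[OF norm_propagate_le] mult_right_mono) auto
qed

lemma tail_split: "tail n0 = tail (n0 + int k) + (\<Sum>i<k. w (n0 + int i))"
  unfolding tail_def using suminf_split_initial_segment[OF summable_top[of n0], of k]
  by (simp add: add_ac)

lemma tail_antimono: "n0 \<le> n \<Longrightarrow> tail n \<le> tail n0"
  using tail_split[of n0 "nat (n - n0)"] sum_nonneg[of "{..<nat (n - n0)}" "\<lambda>i. w (n0 + int i)"] w_nonneg
  by auto

lemma tail_tendsto_0: "(tail \<longlongrightarrow> 0) at_top"
proof -
  have "(\<lambda>k. \<Sum>i<k. w (0 + int i)) \<longlonglongrightarrow> tail 0"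
    unfolding tail_def by (rule summable_LIMSEQ[OF summable_top])
  then have "(\<lambda>k. tail 0 - (\<Sum>i<k. w (0 + int i))) \<longlonglongrightarrow> tail 0 - tail 0"
    by (intro tendsto_intros)
  moreover have "tail (0 + int k) = tail 0 - (\<Sum>i<k. w (0 + int i))" for k
    using tail_split[of 0 k] by linarith
  ultimately show ?thesis
    unfolding tendsto_at_top_int_iff[of _ _ 0] by simp
qed

lemma solution_eq_0_if_tendsto_0:
  assumes "solves T X" "(X \<longlongrightarrow> 0) at_top"
  shows "X n = 0"
proof -
  have "((\<lambda>k. exp (tail n) * norm (X (n + int k))) \<longlongrightarrow> exp (tail n) * 0) sequentially"
    using assms(2) unfolding tendsto_at_top_int_iff[of _ _ n] by (intro tendsto_intros tendsto_norm_zero)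
  moreover have "norm (X n) \<le> exp (tail n) * norm (X (n + int k))" for k
    using norm_propagate_le_tail solves_propagate[OF assms(1)] by metis
  ultimately have "norm (X n) \<le> exp (tail n) * 0"
    by (intro LIMSEQ_le_const[of "\<lambda>k. exp (tail n) * norm (X (n + int k))"]) auto
  then show ?thesis by simp
qed

lemma solutions_eq_if_same_limit:
  assumes "solves T X" "solves T Y" "(X \<longlongrightarrow> e) at_top" "(Y \<longlongrightarrow> e) at_top"
  shows "X = Y"
proof
  fix n
  have "solves T (\<lambda>n. X n - Y n)"
    using assms(1,2) unfolding solves_def by (metis T_diff)
  moreover have "((\<lambda>n. X n - Y n) \<longlongrightarrow> e - e) at_top"
    by (intro tendsto_intros assms(3,4))
  ultimately have "X n - Y n = 0"
    by (intro solution_eq_0_if_tendsto_0) auto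
  then show "X n = Y n" by simp
qed

context
  fixes e :: 'a
  assumes e_close: "\<And>n. norm (T n e - e) \<le> w n"
begin

definition correction :: "int \<Rightarrow> nat \<Rightarrow> 'a" where
  "correction n i = propagate T n i (T (n + int i) e - e)"

text \<open>\<open>series_solution n = lim\<^sub>k propagate T n k e\<close>, written as a telescoping series.\<close>

definition series_solution :: "int \<Rightarrow> 'a" where
  "series_solution n = e + (\<Sum>i. correction n i)"

lemma norm_correction_le: "norm (correction n i) \<le> exp (tail n) * w (n + int i)"
  unfolding correction_def by (rule order_trans[OF norm_propagate_le_tail mult_left_mono[OF e_close]]) simp

lemma summable_norm_correction: "summable (\<lambda>i. norm (correction n i))"
  by (rule summable_comparison_test'[OF summable_mult[OF summable_top[of n]]]) (use norm_correction_le in auto)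

lemma solves_series_solution: "solves T series_solution"
  unfolding solves_def
proof
  fix n
  have summable: "summable (correction m)" for m
    by (rule summable_norm_cancel[OF summable_norm_correction])
  have Suc: "correction n (Suc i) = T n (correction (n + 1) i)" for i
    unfolding correction_def by (simp add: add_ac)
  have zero: "correction n 0 = T n e - e"
    unfolding correction_def by simp
  have "series_solution n = e + (correction n 0 + (\<Sum>i. correction n (Suc i)))"
    unfolding series_solution_def by (simp add: suminf_split_head[OF summable])
  also have "\<dots> = e + (T n e - e + (\<Sum>i. T n (correction (n + 1) i)))"
    by (simp only: Suc zero)
  also have "\<dots> = T n e + T n (\<Sum>i. correction (n + 1) i)"
    by (simp add: bounded_linear.suminf[OF T_bounded_linear summable])
  also have "\<dots> = T n (series_solution (n + 1))"
    unfolding series_solution_def by (simp add: T_add)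
  finally show "series_solution n = T n (series_solution (n + 1))" .
qed

lemma series_solution_tendsto: "(series_solution \<longlongrightarrow> e) at_top"
proof -
  have le: "norm (series_solution n - e) \<le> exp (tail 0) * tail n" if "n \<ge> 0" for n
  proof -
    have "norm (series_solution n - e) \<le> (\<Sum>i. norm (correction n i))"
      unfolding series_solution_def by (simp add: summable_norm summable_norm_correction)
    also have "\<dots> \<le> (\<Sum>i. exp (tail n) * w (n + int i))"
      by (intro suminf_le summable_norm_correction norm_correction_le summable_mult summable_top)
    also have "\<dots> = exp (tail n) * tail n"
      unfolding tail_def by (intro suminf_mult summable_top)
    also have "\<dots> \<le> exp (tail 0) * tail n"
      using tail_antimono[OF that] by (intro mult_right_mono tail_nonneg) auto
    finally show ?thesis .
  qed
  have "((\<lambda>n. exp (tail 0) * tail n) \<longlongrightarrow> exp (tail 0) * 0) at_top"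
    by (intro tendsto_intros tail_tendsto_0)
  then have lim: "((\<lambda>n. exp (tail 0) * tail n) \<longlongrightarrow> 0) at_top"
    by simp
  have "eventually (\<lambda>n. norm (series_solution n - e) \<le> exp (tail 0) * tail n) at_top"
    using eventually_ge_at_top[of 0] by eventually_elim (rule le)
  then have "((\<lambda>n. norm (series_solution n - e)) \<longlongrightarrow> 0) at_top"
    by (intro tendsto_sandwich[OF _ _ tendsto_const lim]) auto
  then show ?thesis
    by (simp add: tendsto_norm_zero_iff LIM_zero_iff)
qed

end

lemma solution_bounded_at_bot:
  assumes "solves T X" "n \<le> 0"
  shows "norm (X n) \<le> exp (\<Sum>i. w (- 1 - int i)) * norm (X 0)"
proof -
  define k where "k = nat (- n)"
  have n: "n = - int k"
    using assms(2) k_def by simp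
  have "(\<Sum>i<k. w (n + int i)) = (\<Sum>i<k. w (- 1 - int (k - Suc i)))"
    by (intro sum.cong refl) (simp add: n of_nat_diff)
  also have "\<dots> = (\<Sum>i<k. w (- 1 - int i))"
    by (rule sum.nat_diff_reindex)
  also have "\<dots> \<le> (\<Sum>i. w (- 1 - int i))"
    using summable_bot[of "- 1"] w_nonneg by (intro sum_le_suminf) simp_all
  finally have "exp (\<Sum>i<k. w (n + int i)) * norm (X 0) \<le> exp (\<Sum>i. w (- 1 - int i)) * norm (X 0)"
    by (intro mult_right_mono) simp_all
  moreover have "X n = propagate T n k (X 0)"
    using solves_propagate[OF assms(1), of n k] by (simp add: n)
  ultimately show ?thesis
    using norm_propagate_le[of n k "X 0"] by simp
qed

lemma solution_component_converges_at_bot: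
  fixes f :: "'a \<Rightarrow> 'b::banach"
  assumes "solves T X" and f: "\<And>n v. norm (f (T n v) - f v) \<le> w n * norm v"
  shows "\<exists>L. ((\<lambda>n. f (X n)) \<longlongrightarrow> L) at_bot"
proof -
  define C where "C = exp (\<Sum>i. w (- 1 - int i)) * norm (X 0)"
  have C: "norm (X n) \<le> C" if "n \<le> 0" for n
    unfolding C_def using solution_bounded_at_bot[OF assms(1) that] .
  define y where "y k = f (X (- int k))" for k
  have y_step: "norm (y (Suc k) - y k) \<le> C * w (- 1 - int k)" for k
  proof -
    have "X (- 1 - int k) = T (- 1 - int k) (X (- 1 - int k + 1))"
      using assms(1) unfolding solves_def by blast
    then have "y (Suc k) - y k = f (T (- 1 - int k) (X (- int k))) - f (X (- int k))"
      by (simp add: y_def)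
    also have "norm \<dots> \<le> w (- 1 - int k) * norm (X (- int k))"
      by (rule f)
    also have "\<dots> \<le> w (- 1 - int k) * C"
      by (intro mult_left_mono C w_nonneg) simp
    finally show ?thesis by (simp add: mult.commute)
  qed
  have "summable (\<lambda>k. C * w (- 1 - int k))"
    using summable_mult[OF summable_bot[of "- 1"]] by simp
  then have "summable (\<lambda>k. norm (y (Suc k) - y k))"
    by (rule summable_comparison_test'[where N = 0]) (simp add: y_step)
  then have "summable (\<lambda>k. y (Suc k) - y k)"
    by (rule summable_norm_cancel)
  then have "convergent (\<lambda>k. y k - y 0)"
    by (simp only: summable_iff_convergent sum_lessThan_telescope)
  then obtain L where "(\<lambda>k. y k - y 0) \<longlonglongrightarrow> L"
    by (auto simp: convergent_def)
  then have "(\<lambda>k. y k - y 0 + y 0) \<longlonglongrightarrow> L + y 0"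
    by (intro tendsto_intros)
  then show ?thesis
    unfolding tendsto_at_bot_int_iff[of _ _ 0] y_def by auto
qed

end

lemma is_sol_iff_solves: "is_sol M z X \<longleftrightarrow> solves (\<lambda>n. mat_vec (M z n)) X"
proof -
  have "(case M z n of (a, b, c, d) \<Rightarrow>
      fst (X n) = a * fst (X (n + 1)) + b * snd (X (n + 1)) \<and>
      snd (X n) = c * fst (X (n + 1)) + d * snd (X (n + 1))) \<longleftrightarrow> X n = mat_vec (M z n) (X (n + 1))" for n
  proof -
    obtain a b c d where M: "M z n = (a, b, c, d)" by (cases "M z n") auto
    show ?thesis by (simp add: M mat_vec_def prod_eq_iff)
  qed
  then show ?thesis
    unfolding is_sol_def solves_def by simp
qed

definition normalised_sol ::
    "system \<Rightarrow> complex \<Rightarrow> int filter \<Rightarrow> (int \<Rightarrow> complex) \<Rightarrow> vec2 \<Rightarrow> (int \<Rightarrow> vec2) \<Rightarrow> bool" where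
  "normalised_sol M z F \<sigma> e X \<longleftrightarrow> is_sol M z X \<and> ((\<lambda>n. vec_scale (\<sigma> n) (X n)) \<longlongrightarrow> e) F"

lemma jost_psi_eq: "jost_psi M z = (THE X. normalised_sol M z at_top (\<lambda>n. z powi (- n)) (0, 1) X)"
  and jost_psibar_eq: "jost_psibar M z = (THE X. normalised_sol M z at_top (\<lambda>n. z powi n) (1, 0) X)"
  and jost_phi_eq: "jost_phi M z = (THE X. normalised_sol M z at_bot (\<lambda>n. z powi n) (1, 0) X)"
  and jost_phibar_eq: "jost_phibar M z = (THE X. normalised_sol M z at_bot (\<lambda>n. z powi (- n)) (0, 1) X)"
  by (simp_all add: jost_psi_def jost_psibar_def jost_phi_def jost_phibar_def normalised_sol_def
      vec_scale_def tendsto_Pair_iff)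

lemma is_sol_iff_solves_scaled:
  assumes "\<And>n. \<sigma> n \<noteq> 0" "\<And>n. \<sigma> n = \<rho> * \<sigma> (n + 1)"
  shows "is_sol M z X \<longleftrightarrow> solves (\<lambda>n. mat_vec (mat_scale \<rho> (M z n))) (\<lambda>n. vec_scale (\<sigma> n) (X n))"
proof -
  have "vec_scale (\<sigma> n) (X n) = mat_vec (mat_scale \<rho> (M z n)) (vec_scale (\<sigma> (n + 1)) (X (n + 1)))
      \<longleftrightarrow> X n = mat_vec (M z n) (X (n + 1))" for n
    using vec_scale_eq_iff[OF assms(1)[of n]] assms(2)[of n]
    by (simp add: mat_vec_mat_scale mat_vec_vec_scale mult.commute)
  then show ?thesis
    unfolding is_sol_iff_solves solves_def by simp
qed

lemma normalised_sol_iff_solves_scaled: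
  assumes "\<And>n. \<sigma> n \<noteq> 0" "\<And>n. \<sigma> n = \<rho> * \<sigma> (n + 1)"
  shows "normalised_sol M z F \<sigma> e X \<longleftrightarrow>
    solves (\<lambda>n. mat_vec (mat_scale \<rho> (M z n))) (\<lambda>n. vec_scale (\<sigma> n) (X n)) \<and>
    ((\<lambda>n. vec_scale (\<sigma> n) (X n)) \<longlongrightarrow> e) F"
  unfolding normalised_sol_def is_sol_iff_solves_scaled[where \<sigma> = \<sigma> and \<rho> = \<rho>, OF assms] ..

lemma ex1_normalised_sol_at_top:
  fixes M :: system and z \<rho> :: complex
  assumes sb: "summably_bounded (\<lambda>n. mat_vec (mat_scale \<rho> (M z n))) w"
    and \<sigma>: "\<And>n. \<sigma> n \<noteq> 0" "\<And>n. \<sigma> n = \<rho> * \<sigma> (n + 1)"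
    and e: "\<And>n. norm (mat_vec (mat_scale \<rho> (M z n)) e - e) \<le> w n"
  shows "\<exists>!X. normalised_sol M z at_top \<sigma> e X"
proof -
  interpret summably_bounded "\<lambda>n. mat_vec (mat_scale \<rho> (M z n))" w by (rule sb)
  note normalised_iff = normalised_sol_iff_solves_scaled[where M = M and z = z and \<sigma> = \<sigma> and \<rho> = \<rho>, OF \<sigma>]
  define Y where "Y = series_solution e"
  have Y: "solves (\<lambda>n. mat_vec (mat_scale \<rho> (M z n))) Y" "(Y \<longlongrightarrow> e) at_top"
    unfolding Y_def using solves_series_solution[OF e] series_solution_tendsto[OF e] .
  show ?thesis
  proof
    have "(\<lambda>n. vec_scale (\<sigma> n) (vec_scale (1 / \<sigma> n) (Y n))) = Y"
      using \<sigma>(1) by simp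
    then show "normalised_sol M z at_top \<sigma> e (\<lambda>n. vec_scale (1 / \<sigma> n) (Y n))"
      unfolding normalised_iff using Y by simp
  next
    fix X assume "normalised_sol M z at_top \<sigma> e X"
    then have "(\<lambda>n. vec_scale (\<sigma> n) (X n)) = Y"
      using Y unfolding normalised_iff by (intro solutions_eq_if_same_limit) auto
    then have "Y n = vec_scale (\<sigma> n) (X n)" for n
      by (simp add: fun_eq_iff)
    then show "X = (\<lambda>n. vec_scale (1 / \<sigma> n) (Y n))"
      using \<sigma>(1) by (simp add: fun_eq_iff)
  qed
qed

lemma normalised_sol_at_top_at_bot:
  fixes M :: system and z \<rho> :: complex and f :: "vec2 \<Rightarrow> 'b::banach"
  assumes sb: "summably_bounded (\<lambda>n. mat_vec (mat_scale \<rho> (M z n))) w"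
    and \<sigma>: "\<And>n. \<sigma> n \<noteq> 0" "\<And>n. \<sigma> n = \<rho> * \<sigma> (n + 1)"
    and X: "normalised_sol M z at_top \<sigma> e X"
  shows "\<exists>C. eventually (\<lambda>n. norm (vec_scale (\<sigma> n) (X n)) \<le> C) at_bot"
    and "(\<And>n v. norm (f (mat_vec (mat_scale \<rho> (M z n)) v) - f v) \<le> w n * norm v) \<Longrightarrow>
      \<exists>L. ((\<lambda>n. f (vec_scale (\<sigma> n) (X n))) \<longlongrightarrow> L) at_bot"
proof -
  interpret summably_bounded "\<lambda>n. mat_vec (mat_scale \<rho> (M z n))" w by (rule sb)
  have sol: "solves (\<lambda>n. mat_vec (mat_scale \<rho> (M z n))) (\<lambda>n. vec_scale (\<sigma> n) (X n))"
    using X normalised_sol_iff_solves_scaled[where M = M and z = z and \<sigma> = \<sigma> and \<rho> = \<rho>, OF \<sigma>] by blast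
  show "\<exists>C. eventually (\<lambda>n. norm (vec_scale (\<sigma> n) (X n)) \<le> C) at_bot"
    using solution_bounded_at_bot[OF sol] eventually_le_at_bot[of 0] by (blast intro: eventually_mono)
  show "\<exists>L. ((\<lambda>n. f (vec_scale (\<sigma> n) (X n))) \<longlongrightarrow> L) at_bot"
    if "\<And>n v. norm (f (mat_vec (mat_scale \<rho> (M z n)) v) - f v) \<le> w n * norm v"
    by (rule solution_component_converges_at_bot[OF sol that])
qed

lemma summably_bounded_dist_diag:
  assumes "\<And>n. dist_diag (A n) d1 d2 \<le> w n" "cmod d1 \<le> 1" "cmod d2 \<le> 1"
    and "\<And>n. summable (\<lambda>i. w (n + int i))" "\<And>n. summable (\<lambda>i. w (n - int i))"
  shows "summably_bounded (\<lambda>n. mat_vec (A n)) w"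
proof (rule summably_bounded.intro)
  show "w n \<ge> 0" for n
    using assms(1)[of n] by (rule order_trans[rotated]) (simp add: dist_diag_def)
  show "norm (mat_vec (A n) v) \<le> (1 + w n) * norm v" for n v
    using assms(1)[of n] by (intro order_trans[OF norm_mat_vec_le_dist_diag[OF assms(2,3)]] mult_right_mono) simp_all
qed (simp_all add: assms bounded_linear_mat_vec)

lemma normalised_sol_at_top_snd:
  assumes dist: "\<And>n. dist_diag (mat_scale \<rho> (M z n)) d 1 \<le> w n" "cmod d \<le> 1"
    and summable: "\<And>n. summable (\<lambda>i. w (n + int i))" "\<And>n. summable (\<lambda>i. w (n - int i))"
    and \<sigma>: "\<And>n. \<sigma> n \<noteq> 0" "\<And>n. \<sigma> n = \<rho> * \<sigma> (n + 1)"
  shows "\<exists>!X. normalised_sol M z at_top \<sigma> (0, 1) X"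
    and "normalised_sol M z at_top \<sigma> (0, 1) X \<Longrightarrow> \<exists>C. eventually (\<lambda>n. norm (vec_scale (\<sigma> n) (X n)) \<le> C) at_bot"
    and "normalised_sol M z at_top \<sigma> (0, 1) X \<Longrightarrow> \<exists>L. ((\<lambda>n. \<sigma> n * snd (X n)) \<longlongrightarrow> L) at_bot"
proof -
  have sb: "summably_bounded (\<lambda>n. mat_vec (mat_scale \<rho> (M z n))) w"
    by (rule summably_bounded_dist_diag[OF dist(1,2) _ summable]) simp
  show "\<exists>!X. normalised_sol M z at_top \<sigma> (0, 1) X"
    by (rule ex1_normalised_sol_at_top[where M = M and z = z and \<rho> = \<rho> and \<sigma> = \<sigma>, OF sb \<sigma> order_trans[OF dist_diag_snd(1) dist(1)]])
  assume X: "normalised_sol M z at_top \<sigma> (0, 1) X"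
  note N = normalised_sol_at_top_at_bot[where M = M and z = z and \<rho> = \<rho> and \<sigma> = \<sigma>, OF sb \<sigma> X]
  show "\<exists>C. eventually (\<lambda>n. norm (vec_scale (\<sigma> n) (X n)) \<le> C) at_bot"
    by (rule N(1))
  have "norm (snd (mat_vec (mat_scale \<rho> (M z n)) v) - snd v) \<le> w n * norm v" for n v
    using dist(1)[of n] by (intro order_trans[OF dist_diag_snd(2)] mult_right_mono) simp_all
  from N(2)[OF this] show "\<exists>L. ((\<lambda>n. \<sigma> n * snd (X n)) \<longlongrightarrow> L) at_bot"
    by (simp add: vec_scale_def)
qed

lemma normalised_sol_at_top_fst:
  assumes dist: "\<And>n. dist_diag (mat_scale \<rho> (M z n)) 1 d \<le> w n" "cmod d \<le> 1"
    and summable: "\<And>n. summable (\<lambda>i. w (n + int i))" "\<And>n. summable (\<lambda>i. w (n - int i))"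
    and \<sigma>: "\<And>n. \<sigma> n \<noteq> 0" "\<And>n. \<sigma> n = \<rho> * \<sigma> (n + 1)"
  shows "\<exists>!X. normalised_sol M z at_top \<sigma> (1, 0) X"
    and "normalised_sol M z at_top \<sigma> (1, 0) X \<Longrightarrow> \<exists>C. eventually (\<lambda>n. norm (vec_scale (\<sigma> n) (X n)) \<le> C) at_bot"
    and "normalised_sol M z at_top \<sigma> (1, 0) X \<Longrightarrow> \<exists>L. ((\<lambda>n. \<sigma> n * fst (X n)) \<longlongrightarrow> L) at_bot"
proof -
  have sb: "summably_bounded (\<lambda>n. mat_vec (mat_scale \<rho> (M z n))) w"
    by (rule summably_bounded_dist_diag[OF dist(1) _ dist(2) summable]) simp
  show "\<exists>!X. normalised_sol M z at_top \<sigma> (1, 0) X"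
    by (rule ex1_normalised_sol_at_top[where M = M and z = z and \<rho> = \<rho> and \<sigma> = \<sigma>, OF sb \<sigma> order_trans[OF dist_diag_fst(1) dist(1)]])
  assume X: "normalised_sol M z at_top \<sigma> (1, 0) X"
  note N = normalised_sol_at_top_at_bot[where M = M and z = z and \<rho> = \<rho> and \<sigma> = \<sigma>, OF sb \<sigma> X]
  show "\<exists>C. eventually (\<lambda>n. norm (vec_scale (\<sigma> n) (X n)) \<le> C) at_bot"
    by (rule N(1))
  have "norm (fst (mat_vec (mat_scale \<rho> (M z n)) v) - fst v) \<le> w n * norm v" for n v
    using dist(1)[of n] by (intro order_trans[OF dist_diag_fst(2)] mult_right_mono) simp_all
  from N(2)[OF this] show "\<exists>L. ((\<lambda>n. \<sigma> n * fst (X n)) \<longlongrightarrow> L) at_bot"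
    by (simp add: vec_scale_def)
qed

definition reflect :: "system \<Rightarrow> system" where
  "reflect M z m = mat_inv (M z (- m - 1))"

lemma is_sol_reflect:
  assumes "\<And>n. mat_det (M z n) \<noteq> 0"
  shows "is_sol (reflect M) z (\<lambda>m. X (- m)) \<longleftrightarrow> is_sol M z X"
proof -
  have "is_sol (reflect M) z (\<lambda>m. X (- m)) \<longleftrightarrow>
      (\<forall>m. X (- m) = mat_vec (mat_inv (M z (- m - 1))) (X (- m - 1)))"
    by (simp add: is_sol_iff_solves solves_def reflect_def)
  also have "\<dots> \<longleftrightarrow> (\<forall>n. X (n + 1) = mat_vec (mat_inv (M z n)) (X n))"
  proof (intro iffI allI)
    fix n
    assume "\<forall>m. X (- m) = mat_vec (mat_inv (M z (- m - 1))) (X (- m - 1))"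
    from spec[OF this, of "- n - 1"] show "X (n + 1) = mat_vec (mat_inv (M z n)) (X n)"
      by (simp add: add.commute)
  next
    fix m
    assume "\<forall>n. X (n + 1) = mat_vec (mat_inv (M z n)) (X n)"
    from spec[OF this, of "- m - 1"] show "X (- m) = mat_vec (mat_inv (M z (- m - 1))) (X (- m - 1))"
      by simp
  qed
  also have "\<dots> \<longleftrightarrow> is_sol M z X"
    unfolding is_sol_iff_solves solves_def using mat_vec_inv_cancel[OF assms] by metis
  finally show ?thesis .
qed

lemma normalised_sol_reflect:
  assumes "\<And>n. mat_det (M z n) \<noteq> 0"
  shows "normalised_sol (reflect M) z at_top (\<lambda>m. \<sigma> (- m)) e (\<lambda>m. X (- m)) \<longleftrightarrow> normalised_sol M z at_bot \<sigma> e X"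
  unfolding normalised_sol_def is_sol_reflect[of M z, OF assms]
    tendsto_at_bot_mirror[of "\<lambda>n. vec_scale (\<sigma> n) (X n)"] ..

lemma ex1_normalised_sol_reflect:
  assumes "\<And>n. mat_det (M z n) \<noteq> 0"
    and "\<exists>!Y. normalised_sol (reflect M) z at_top (\<lambda>m. \<sigma> (- m)) e Y"
  shows "\<exists>!X. normalised_sol M z at_bot \<sigma> e X"
proof -
  obtain Y where Y: "normalised_sol (reflect M) z at_top (\<lambda>m. \<sigma> (- m)) e Y"
    and Y_unique: "\<And>Y'. normalised_sol (reflect M) z at_top (\<lambda>m. \<sigma> (- m)) e Y' \<Longrightarrow> Y' = Y"
    using assms(2) by blast
  show ?thesis
  proof
    show "normalised_sol M z at_bot \<sigma> e (\<lambda>n. Y (- n))"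
      using Y normalised_sol_reflect[of M z, OF assms(1), of \<sigma> e "\<lambda>n. Y (- n)"] by simp
  next
    fix X
    assume "normalised_sol M z at_bot \<sigma> e X"
    then have "(\<lambda>m. X (- m)) = Y"
      using Y_unique normalised_sol_reflect[of M z, OF assms(1)] by blast
    then show "X = (\<lambda>n. Y (- n))"
      by (auto simp: fun_eq_iff) (metis minus_minus)
  qed
qed

lemma vec_det_sol_const:
  assumes "\<And>n. mat_det (M z n) = 1" "is_sol M z X" "is_sol M z Y"
  shows "vec_det (X n) (Y n) = vec_det (X 0) (Y 0)"
proof -
  have step: "vec_det (X n) (Y n) = vec_det (X (n + 1)) (Y (n + 1))" for n
  proof -
    have "X n = mat_vec (M z n) (X (n + 1))" "Y n = mat_vec (M z n) (Y (n + 1))"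
      using assms(2,3) unfolding is_sol_iff_solves solves_def by blast+
    then show ?thesis
      by (simp add: vec_det_mat_vec assms(1))
  qed
  show ?thesis
  proof (induction n rule: int_induct[where k = 0])
    case (step1 i)
    then show ?case using step[of i] by simp
  next
    case (step2 i)
    then show ?case using step[of "i - 1"] by simp
  qed simp
qed

lemma vec_det_tendsto:
  assumes \<sigma>\<tau>: "\<And>n. \<sigma> n * \<tau> n = 1"
  shows "((\<lambda>n. vec_scale (\<sigma> n) (X n)) \<longlongrightarrow> (1, 0)) F \<Longrightarrow>
      eventually (\<lambda>n. norm (vec_scale (\<tau> n) (Y n)) \<le> C) F \<Longrightarrow>
      ((\<lambda>n. \<tau> n * snd (Y n)) \<longlongrightarrow> L) F \<Longrightarrow> ((\<lambda>n. vec_det (X n) (Y n)) \<longlongrightarrow> L) F"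
    and "((\<lambda>n. vec_scale (\<tau> n) (Y n)) \<longlongrightarrow> (0, 1)) F \<Longrightarrow>
      eventually (\<lambda>n. norm (vec_scale (\<sigma> n) (X n)) \<le> C) F \<Longrightarrow>
      ((\<lambda>n. \<sigma> n * fst (X n)) \<longlongrightarrow> L) F \<Longrightarrow> ((\<lambda>n. vec_det (X n) (Y n)) \<longlongrightarrow> L) F"
proof -
  have det: "vec_det (X n) (Y n) = (\<sigma> n * fst (X n)) * (\<tau> n * snd (Y n)) - (\<sigma> n * snd (X n)) * (\<tau> n * fst (Y n))" for n
  proof -
    have "(\<sigma> n * fst (X n)) * (\<tau> n * snd (Y n)) - (\<sigma> n * snd (X n)) * (\<tau> n * fst (Y n)) =
        (\<sigma> n * \<tau> n) * vec_det (X n) (Y n)"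
      by (simp add: vec_det_def algebra_simps)
    then show ?thesis by (simp add: \<sigma>\<tau>)
  qed
  show "((\<lambda>n. vec_det (X n) (Y n)) \<longlongrightarrow> L) F"
    if X: "((\<lambda>n. vec_scale (\<sigma> n) (X n)) \<longlongrightarrow> (1, 0)) F"
      and Y: "eventually (\<lambda>n. norm (vec_scale (\<tau> n) (Y n)) \<le> C) F" "((\<lambda>n. \<tau> n * snd (Y n)) \<longlongrightarrow> L) F"
  proof -
    have X': "((\<lambda>n. \<sigma> n * fst (X n)) \<longlongrightarrow> 1) F" "((\<lambda>n. \<sigma> n * snd (X n)) \<longlongrightarrow> 0) F"
      using X by (simp_all add: vec_scale_def tendsto_Pair_iff)
    have "eventually (\<lambda>n. cmod (\<tau> n * fst (Y n)) \<le> C) F"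
      using Y(1) by (auto elim!: eventually_mono intro: order_trans[OF norm_vec_scale_fst])
    then have "((\<lambda>n. (\<sigma> n * fst (X n)) * (\<tau> n * snd (Y n)) - (\<sigma> n * snd (X n)) * (\<tau> n * fst (Y n))) \<longlongrightarrow> 1 * L - 0) F"
      by (intro tendsto_diff tendsto_mult X' Y(2) tendsto_mult_zero_bounded)
    then show ?thesis by (simp add: det)
  qed
  show "((\<lambda>n. vec_det (X n) (Y n)) \<longlongrightarrow> L) F"
    if Y: "((\<lambda>n. vec_scale (\<tau> n) (Y n)) \<longlongrightarrow> (0, 1)) F"
      and X: "eventually (\<lambda>n. norm (vec_scale (\<sigma> n) (X n)) \<le> C) F" "((\<lambda>n. \<sigma> n * fst (X n)) \<longlongrightarrow> L) F"
  proof -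
    have Y': "((\<lambda>n. \<tau> n * fst (Y n)) \<longlongrightarrow> 0) F" "((\<lambda>n. \<tau> n * snd (Y n)) \<longlongrightarrow> 1) F"
      using Y by (simp_all add: vec_scale_def tendsto_Pair_iff)
    have "eventually (\<lambda>n. cmod (\<sigma> n * snd (X n)) \<le> C) F"
      using X(1) by (auto elim!: eventually_mono intro: order_trans[OF norm_vec_scale_snd])
    then have "((\<lambda>n. (\<sigma> n * fst (X n)) * (\<tau> n * snd (Y n)) - (\<tau> n * fst (Y n)) * (\<sigma> n * snd (X n))) \<longlongrightarrow> L * 1 - 0) F"
      by (intro tendsto_diff tendsto_mult X(2) Y' tendsto_mult_zero_bounded)
    then show ?thesis by (simp add: det mult.commute)
  qed
qed

section \<open>Gauge transformations\<close>

definition gauge_transform :: "system \<Rightarrow> system \<Rightarrow> complex \<Rightarrow> (int \<Rightarrow> mat2) \<Rightarrow> bool" where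
  "gauge_transform Ma Mb z G \<longleftrightarrow>
     (\<forall>n. mat_det (G n) \<noteq> 0 \<and> mat_mult (G n) (Ma z n) = mat_mult (Mb z n) (G (n + 1)))"

lemma gauge_inv:
  assumes "gauge_transform Ma Mb z G"
  shows "gauge_transform Mb Ma z (\<lambda>n. mat_inv (G n))"
  unfolding gauge_transform_def
proof (intro allI conjI)
  fix n
  have det: "mat_det (G n) \<noteq> 0" "mat_det (G (n + 1)) \<noteq> 0"
    using assms by (auto simp: gauge_transform_def)
  then show "mat_det (mat_inv (G n)) \<noteq> 0"
    by (simp add: mat_det_inv)
  have intertwine: "mat_mult (Mb z n) (G (n + 1)) = mat_mult (G n) (Ma z n)"
    using assms by (simp add: gauge_transform_def)
  have "mat_mult (mat_inv (G n)) (Mb z n) =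
      mat_mult (mat_inv (G n)) (mat_mult (mat_mult (Mb z n) (G (n + 1))) (mat_inv (G (n + 1))))"
    by (simp add: mat_mult_assoc mat_inv_mult det)
  also have "\<dots> = mat_mult (mat_mult (mat_inv (G n)) (G n)) (mat_mult (Ma z n) (mat_inv (G (n + 1))))"
    by (simp only: intertwine mat_mult_assoc)
  also have "\<dots> = mat_mult (Ma z n) (mat_inv (G (n + 1)))"
    by (simp add: mat_inv_mult det)
  finally show "mat_mult (mat_inv (G n)) (Mb z n) = mat_mult (Ma z n) (mat_inv (G (n + 1)))" .
qed

lemma is_sol_gauge:
  assumes "gauge_transform Ma Mb z G" "is_sol Ma z X"
  shows "is_sol Mb z (\<lambda>n. vec_scale c (mat_vec (G n) (X n)))"
  unfolding is_sol_iff_solves solves_def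
proof
  fix n
  have sol: "X n = mat_vec (Ma z n) (X (n + 1))"
    using assms(2) unfolding is_sol_iff_solves solves_def by blast
  have intertwine: "mat_mult (G n) (Ma z n) = mat_mult (Mb z n) (G (n + 1))"
    using assms(1) unfolding gauge_transform_def by blast
  have "mat_vec (G n) (X n) = mat_vec (Mb z n) (mat_vec (G (n + 1)) (X (n + 1)))"
    by (simp only: sol mat_vec_mult[symmetric] intertwine)
  then show "vec_scale c (mat_vec (G n) (X n)) = mat_vec (Mb z n) (vec_scale c (mat_vec (G (n + 1)) (X (n + 1))))"
    by (simp add: mat_vec_vec_scale)
qed

lemma normalised_sol_gauge:
  assumes "gauge_transform Ma Mb z G" "(G \<longlongrightarrow> Gi) F" "mat_vec Gi e = vec_scale c e" "c \<noteq> 0"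
    and "normalised_sol Ma z F \<sigma> e X"
  shows "normalised_sol Mb z F \<sigma> e (\<lambda>n. vec_scale (1 / c) (mat_vec (G n) (X n)))"
proof -
  have "((\<lambda>n. vec_scale (1 / c) (mat_vec (G n) (vec_scale (\<sigma> n) (X n)))) \<longlongrightarrow> vec_scale (1 / c) (mat_vec Gi e)) F"
    using assms(2,5) unfolding normalised_sol_def by (intro tendsto_intros) auto
  then show ?thesis
    using assms is_sol_gauge[OF assms(1)] unfolding normalised_sol_def
    by (simp add: mat_vec_vec_scale mult.commute)
qed

lemma the_normalised_sol_gauge:
  assumes gauge: "gauge_transform Ma Mb z G" and lim: "(G \<longlongrightarrow> Gi) F" "mat_det Gi \<noteq> 0"
    and e: "mat_vec Gi e = vec_scale c e" "c \<noteq> 0"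
    and ex1: "\<exists>!X. normalised_sol Ma z F \<sigma> e X"
  shows "(THE Y. normalised_sol Mb z F \<sigma> e Y) =
    (\<lambda>n. vec_scale (1 / c) (mat_vec (G n) ((THE X. normalised_sol Ma z F \<sigma> e X) n)))"
proof (rule the1_equality)
  define X0 where "X0 = (THE X. normalised_sol Ma z F \<sigma> e X)"
  have X0: "normalised_sol Ma z F \<sigma> e X0"
    unfolding X0_def by (rule theI'[OF ex1])
  have e_inv: "mat_vec (mat_inv Gi) e = vec_scale (1 / c) e"
    using mat_vec_inv_cancel(1)[OF lim(2), of e] e
    by (metis mat_vec_vec_scale vec_scale_1 vec_scale_vec_scale nonzero_divide_eq_eq)
  show Y0: "normalised_sol Mb z F \<sigma> e (\<lambda>n. vec_scale (1 / c) (mat_vec (G n) (X0 n)))"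
    by (rule normalised_sol_gauge[OF gauge lim(1) e X0])
  show "\<exists>!Y. normalised_sol Mb z F \<sigma> e Y"
  proof (rule ex1I[where P = "normalised_sol Mb z F \<sigma> e", OF Y0])
    fix Y
    assume "normalised_sol Mb z F \<sigma> e Y"
    then have "normalised_sol Ma z F \<sigma> e (\<lambda>n. vec_scale (1 / (1 / c)) (mat_vec (mat_inv (G n)) (Y n)))"
      using e(2) by (intro normalised_sol_gauge[OF gauge_inv[OF gauge] tendsto_mat_inv[OF lim] e_inv]) auto
    then have "(\<lambda>n. vec_scale c (mat_vec (mat_inv (G n)) (Y n))) = X0"
      using ex1 X0 by auto
    moreover have "Y n = vec_scale (1 / c) (mat_vec (G n) (vec_scale c (mat_vec (mat_inv (G n)) (Y n))))" for n
      using gauge e(2) by (simp add: gauge_transform_def mat_vec_vec_scale mat_vec_inv_cancel)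
    ultimately show "Y = (\<lambda>n. vec_scale (1 / c) (mat_vec (G n) (X0 n)))"
      by auto
  qed
qed

text \<open>No assumption \<open>L \<noteq> 0\<close> is needed: since \<open>1 / 0 = 0\<close>, both sides vanish when \<open>L = 0\<close>.\<close>

lemma inverse_Lim_gauge:
  fixes Ma Mb :: system and z :: complex and F F' :: "int filter" and \<sigma> \<tau> :: "int \<Rightarrow> complex"
    and e :: vec2 and comp :: "vec2 \<Rightarrow> complex"
  defines "X \<equiv> THE X. normalised_sol Ma z F \<sigma> e X"
  assumes gauge: "gauge_transform Ma Mb z G"
    and G: "(G \<longlongrightarrow> Gi) F" "mat_det Gi \<noteq> 0" "mat_vec Gi e = vec_scale c e" "c \<noteq> 0"
    and ex1: "\<exists>!X. normalised_sol Ma z F \<sigma> e X"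
    and comp: "\<And>a v. comp (vec_scale a v) = a * comp v"
    and lim: "((\<lambda>n. \<tau> n * comp (mat_vec (G n) (X n))) \<longlongrightarrow> \<kappa> * L) F'"
      "((\<lambda>n. \<tau> n * comp (X n)) \<longlongrightarrow> L) F'" "F' \<noteq> bot"
  shows "1 / Lim F' (\<lambda>n. \<tau> n * comp ((THE Y. normalised_sol Mb z F \<sigma> e Y) n)) =
    c / \<kappa> * (1 / Lim F' (\<lambda>n. \<tau> n * comp (X n)))"
proof -
  have "(THE Y. normalised_sol Mb z F \<sigma> e Y) = (\<lambda>n. vec_scale (1 / c) (mat_vec (G n) (X n)))"
    unfolding X_def by (rule the_normalised_sol_gauge[OF gauge G ex1])
  then have "Lim F' (\<lambda>n. \<tau> n * comp ((THE Y. normalised_sol Mb z F \<sigma> e Y) n)) = 1 / c * (\<kappa> * L)"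
    using tendsto_mult_left[OF lim(1), of "1 / c"] lim(3) by (intro tendsto_Lim) (simp_all add: comp ac_simps)
  moreover have "Lim F' (\<lambda>n. \<tau> n * comp (X n)) = L"
    using lim(2,3) by (rule tendsto_Lim[rotated])
  ultimately show ?thesis
    using G(4) by simp
qed

locale diagonal_gauge =
  fixes Ma Mb :: system and z :: complex and G :: "int \<Rightarrow> mat2" and a b a' b' :: complex
  assumes gauge: "gauge_transform Ma Mb z G"
    and tendsto_at_top: "(G \<longlongrightarrow> diag a b) at_top"
    and tendsto_at_bot: "(G \<longlongrightarrow> diag a' b') at_bot"
    and nonzero: "a \<noteq> 0" "b \<noteq> 0" "a' \<noteq> 0" "b' \<noteq> 0"
begin

lemma trans_l_eq:
  assumes "\<exists>!X. normalised_sol Ma z at_top (\<lambda>n. z powi (- n)) (0, 1) X"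
    and "eventually (\<lambda>n. norm (vec_scale (z powi (- n)) (jost_psi Ma z n)) \<le> C) at_bot"
    and "((\<lambda>n. z powi (- n) * snd (jost_psi Ma z n)) \<longlongrightarrow> L) at_bot"
  shows "trans_l Mb z = b / b' * trans_l Ma z"
  using tendsto_mat_vec_diag(2)[OF tendsto_at_bot assms(2,3)] assms(3) unfolding trans_l_def jost_psi_eq
  by (intro inverse_Lim_gauge[OF gauge tendsto_at_top _ _ _ assms(1)]) (simp_all add: nonzero vec_scale_def)

lemma trans_r_eq:
  assumes "\<exists>!X. normalised_sol Ma z at_bot (\<lambda>n. z powi n) (1, 0) X"
    and "eventually (\<lambda>n. norm (vec_scale (z powi n) (jost_phi Ma z n)) \<le> C) at_top"
    and "((\<lambda>n. z powi n * fst (jost_phi Ma z n)) \<longlongrightarrow> L) at_top"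
  shows "trans_r Mb z = a' / a * trans_r Ma z"
  using tendsto_mat_vec_diag(1)[OF tendsto_at_top assms(2,3)] assms(3) unfolding trans_r_def jost_phi_eq
  by (intro inverse_Lim_gauge[OF gauge tendsto_at_bot _ _ _ assms(1)]) (simp_all add: nonzero vec_scale_def)

lemma transbar_l_eq:
  assumes "\<exists>!X. normalised_sol Ma z at_top (\<lambda>n. z powi n) (1, 0) X"
    and "eventually (\<lambda>n. norm (vec_scale (z powi n) (jost_psibar Ma z n)) \<le> C) at_bot"
    and "((\<lambda>n. z powi n * fst (jost_psibar Ma z n)) \<longlongrightarrow> L) at_bot"
  shows "transbar_l Mb z = a / a' * transbar_l Ma z"
  using tendsto_mat_vec_diag(1)[OF tendsto_at_bot assms(2,3)] assms(3) unfolding transbar_l_def jost_psibar_eq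
  by (intro inverse_Lim_gauge[OF gauge tendsto_at_top _ _ _ assms(1)]) (simp_all add: nonzero vec_scale_def)

lemma transbar_r_eq:
  assumes "\<exists>!X. normalised_sol Ma z at_bot (\<lambda>n. z powi (- n)) (0, 1) X"
    and "eventually (\<lambda>n. norm (vec_scale (z powi (- n)) (jost_phibar Ma z n)) \<le> C) at_top"
    and "((\<lambda>n. z powi (- n) * snd (jost_phibar Ma z n)) \<longlongrightarrow> L) at_top"
  shows "transbar_r Mb z = b' / b * transbar_r Ma z"
  using tendsto_mat_vec_diag(2)[OF tendsto_at_top assms(2,3)] assms(3) unfolding transbar_r_def jost_phibar_eq
  by (intro inverse_Lim_gauge[OF gauge tendsto_at_bot _ _ _ assms(1)]) (simp_all add: nonzero vec_scale_def)

end

section \<open>Decay and bi-infinite products\<close>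

definition quadratic_decay :: "(int \<Rightarrow> complex) \<Rightarrow> bool" where
  "quadratic_decay h \<longleftrightarrow>
     ((\<lambda>n. of_int \<bar>n\<bar> ^ 2 * h n) \<longlongrightarrow> 0) at_top \<and> ((\<lambda>n. of_int \<bar>n\<bar> ^ 2 * h n) \<longlongrightarrow> 0) at_bot"

lemma rapid_decay_imp_quadratic_decay: "rapid_decay h \<Longrightarrow> quadratic_decay h"
  unfolding rapid_decay_def quadratic_decay_def by blast

lemma rapid_decay_tendsto_0:
  assumes "rapid_decay h"
  shows "(h \<longlongrightarrow> 0) at_top" "(h \<longlongrightarrow> 0) at_bot"
  using assms[unfolded rapid_decay_def, rule_format, of 0] by simp_all

lemma quadratic_decay_mult:
  assumes "quadratic_decay h" "(g \<longlongrightarrow> 0) at_top" "(g \<longlongrightarrow> 0) at_bot"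
  shows "quadratic_decay (\<lambda>n. h n * g n)"
proof -
  have "((\<lambda>n. (of_int \<bar>n\<bar> ^ 2 * h n) * g n) \<longlongrightarrow> 0 * 0) at_top"
    "((\<lambda>n. (of_int \<bar>n\<bar> ^ 2 * h n) * g n) \<longlongrightarrow> 0 * 0) at_bot"
    using assms unfolding quadratic_decay_def by (intro tendsto_mult; simp)+
  then show ?thesis
    unfolding quadratic_decay_def by (simp add: ac_simps)
qed

lemma summable_at_top_if_quadratic_decay:
  fixes h :: "int \<Rightarrow> complex"
  assumes "((\<lambda>n. of_int \<bar>n\<bar> ^ 2 * h n) \<longlongrightarrow> 0) at_top"
  shows "summable (\<lambda>i. cmod (h (n + int i)))"
proof -
  obtain N where N: "\<And>i. i \<ge> N \<Longrightarrow> cmod (of_int \<bar>n + int i\<bar> ^ 2 * h (n + int i)) < 1"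
    using tendstoD[OF assms[unfolded tendsto_at_top_int_iff[of _ _ n]], of 1]
    by (auto simp: eventually_sequentially dist_norm)
  have "summable (\<lambda>i. 4 * inverse (real i ^ 2))"
    by (intro summable_mult inverse_power_summable) auto
  then show ?thesis
  proof (rule summable_comparison_test'[where N = "max N (nat (2 * \<bar>n\<bar> + 1))"])
    fix i
    assume i: "max N (nat (2 * \<bar>n\<bar> + 1)) \<le> i"
    define b where "b = cmod (h (n + int i))"
    have "real i / 2 \<le> real_of_int \<bar>n + int i\<bar>" "real i > 0"
      using i by linarith+
    then have "b * (real i / 2) ^ 2 \<le> b * real_of_int \<bar>n + int i\<bar> ^ 2"
      by (intro mult_left_mono power_mono) (auto simp: b_def)
    also have "\<dots> < 1"
      using N[of i] i unfolding b_def
      by (simp only: norm_mult norm_power norm_of_int of_int_abs abs_abs mult.commute)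
    finally have "b \<le> 4 * inverse (real i ^ 2)"
      using \<open>real i > 0\<close> by (simp add: field_simps power2_eq_square)
    then show "norm (cmod (h (n + int i))) \<le> 4 * inverse (real i ^ 2)"
      by (simp add: b_def)
  qed
qed

lemma summable_if_quadratic_decay:
  assumes "quadratic_decay h"
  shows "summable (\<lambda>i. cmod (h (n + int i)))" "summable (\<lambda>i. cmod (h (n - int i)))"
proof -
  show "summable (\<lambda>i. cmod (h (n + int i)))"
    using assms unfolding quadratic_decay_def by (blast intro: summable_at_top_if_quadratic_decay)
  have "((\<lambda>m. of_int \<bar>m\<bar> ^ 2 * h (- m)) \<longlongrightarrow> 0) at_top"
    using assms unfolding quadratic_decay_def tendsto_at_bot_mirror by simp
  from summable_at_top_if_quadratic_decay[OF this, of "- n"]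
  show "summable (\<lambda>i. cmod (h (n - int i)))"
    by simp
qed

definition prod_from_bot :: "(int \<Rightarrow> complex) \<Rightarrow> int \<Rightarrow> complex" where
  "prod_from_bot f n = Lim at_bot (\<lambda>m. \<Prod>j\<in>{m..n}. f j)"

lemma prod_atLeastAtMost_int_reindex: "(\<Prod>i\<le>k. f (n - int i)) = (\<Prod>j\<in>{n - int k..n}. f j)"
proof (induction k)
  case (Suc k)
  have "{n - int (Suc k)..n} = insert (n - int (Suc k)) {n - int k..n}"
    by auto
  then show ?case using Suc by (simp add: mult.commute)
qed simp

locale convergent_bi_product =
  fixes f :: "int \<Rightarrow> complex"
  assumes nonzero: "\<And>j. f j \<noteq> 0"
    and summable_top: "\<And>n. summable (\<lambda>i. cmod (f (n + int i) - 1))"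
    and summable_bot: "\<And>n. summable (\<lambda>i. cmod (f (n - int i) - 1))"
begin

lemma convergent_prod_top: "convergent_prod (\<lambda>i. f (n + int i))"
  and convergent_prod_bot: "convergent_prod (\<lambda>i. f (n - int i))"
  by (intro abs_convergent_prod_imp_convergent_prod summable_imp_abs_convergent_prod summable_top summable_bot)+

lemma prod_from_bot_eq: "prod_from_bot f n = prodinf (\<lambda>i. f (n - int i))"
  and tendsto_prod_from_bot: "((\<lambda>m. \<Prod>j\<in>{m..n}. f j) \<longlongrightarrow> prodinf (\<lambda>i. f (n - int i))) at_bot"
proof -
  show lim: "((\<lambda>m. \<Prod>j\<in>{m..n}. f j) \<longlongrightarrow> prodinf (\<lambda>i. f (n - int i))) at_bot"
    unfolding tendsto_at_bot_int_iff[of _ _ n] prod_atLeastAtMost_int_reindex[symmetric]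
    by (rule convergent_prod_LIMSEQ[OF convergent_prod_bot])
  show "prod_from_bot f n = prodinf (\<lambda>i. f (n - int i))"
    unfolding prod_from_bot_def by (intro tendsto_Lim lim) simp
qed

lemma prod_from_bot_nonzero: "prod_from_bot f n \<noteq> 0"
  unfolding prod_from_bot_eq by (intro prodinf_nonzero convergent_prod_bot nonzero)

lemma prod_from_bot_rec: "prod_from_bot f n = prod_from_bot f (n - 1) * f n"
proof -
  have "eventually (\<lambda>m. (\<Prod>j\<in>{m..n - 1}. f j) * f n = (\<Prod>j\<in>{m..n}. f j)) at_bot"
    using eventually_le_at_bot[of "n - 1"]
  proof eventually_elim
    case (elim m)
    then have "{m..n} = insert n {m..n - 1}" by auto
    then show ?case by (simp add: mult.commute)
  qed
  moreover have "((\<lambda>m. (\<Prod>j\<in>{m..n - 1}. f j) * f n) \<longlongrightarrow> prod_from_bot f (n - 1) * f n) at_bot"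
    unfolding prod_from_bot_eq by (intro tendsto_intros tendsto_prod_from_bot)
  ultimately have "((\<lambda>m. \<Prod>j\<in>{m..n}. f j) \<longlongrightarrow> prod_from_bot f (n - 1) * f n) at_bot"
    by (rule Lim_transform_eventually[rotated])
  then show ?thesis
    using tendsto_prod_from_bot[of n] unfolding prod_from_bot_eq by (intro tendsto_unique) auto
qed

lemma prod_from_bot_tendsto_at_top: "\<exists>L. L \<noteq> 0 \<and> (prod_from_bot f \<longlongrightarrow> L) at_top"
proof -
  have eq: "prod_from_bot f (0 + int k) = prod_from_bot f 0 * (\<Prod>i<k. f (1 + int i))" for k
  proof (induction k)
    case (Suc k)
    have "prod_from_bot f (int (Suc k)) = prod_from_bot f (int k) * f (1 + int k)"
      using prod_from_bot_rec[of "int (Suc k)"] by simp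
    then show ?case
      using Suc by (simp add: ac_simps)
  qed simp
  have "(\<lambda>k. \<Prod>i<k. f (1 + int i)) \<longlonglongrightarrow> prodinf (\<lambda>i. f (1 + int i))"
    using convergent_prod_LIMSEQ[OF convergent_prod_top[of 1]]
    by (simp add: LIMSEQ_lessThan_iff_atMost)
  then have "(prod_from_bot f \<longlongrightarrow> prod_from_bot f 0 * prodinf (\<lambda>i. f (1 + int i))) at_top"
    unfolding tendsto_at_top_int_iff[of _ _ 0] eq by (intro tendsto_intros)
  moreover have "prod_from_bot f 0 * prodinf (\<lambda>i. f (1 + int i)) \<noteq> 0"
    using prod_from_bot_nonzero prodinf_nonzero[OF convergent_prod_top nonzero] by simp
  ultimately show ?thesis by blast
qed

lemma prod_from_bot_tendsto_at_bot: "\<exists>L. L \<noteq> 0 \<and> (prod_from_bot f \<longlongrightarrow> L) at_bot"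
proof -
  have eq: "prod_from_bot f (0 - int k) = prod_from_bot f 0 / (\<Prod>i<k. f (0 - int i))" for k
  proof (induction k)
    case (Suc k)
    have shift: "0 - int k - 1 = 0 - int (Suc k)"
      by simp
    have "prod_from_bot f (0 - int k) = prod_from_bot f (0 - int (Suc k)) * f (0 - int k)"
      using prod_from_bot_rec[of "0 - int k"] unfolding shift .
    then show ?case
      using Suc nonzero by (simp add: field_simps)
  qed simp
  have lim: "(\<lambda>k. \<Prod>i<k. f (0 - int i)) \<longlonglongrightarrow> prodinf (\<lambda>i. f (0 - int i))"
    using convergent_prod_LIMSEQ[OF convergent_prod_bot[of 0]]
    by (simp add: LIMSEQ_lessThan_iff_atMost)
  have nonzero_lim: "prodinf (\<lambda>i. f (0 - int i)) \<noteq> 0"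
    by (rule prodinf_nonzero[OF convergent_prod_bot nonzero])
  have "(prod_from_bot f \<longlongrightarrow> prod_from_bot f 0 / prodinf (\<lambda>i. f (0 - int i))) at_bot"
    unfolding tendsto_at_bot_int_iff[of _ _ 0] eq
    by (rule tendsto_divide[OF tendsto_const lim nonzero_lim])
  moreover have "prod_from_bot f 0 / prodinf (\<lambda>i. f (0 - int i)) \<noteq> 0"
    using prod_from_bot_nonzero nonzero_lim by simp
  ultimately show ?thesis by blast
qed

end

section \<open>The system (Q) and its gauge transformations\<close>

lemma power_int_minus_rec: "(z::complex) \<noteq> 0 \<Longrightarrow> z powi (- n) = z * z powi (- (n + 1))"
  using power_int_add_1'[of z "- (n + 1)"] by simp

lemma power_int_rec: "(z::complex) \<noteq> 0 \<Longrightarrow> z powi n = 1 / z * z powi (n + 1)"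
  using power_int_add_1'[of z n] by simp

lemma diff_inverse_nonzero:
  assumes "(z::complex) \<noteq> 0" "cmod z \<noteq> 1"
  shows "z - inverse z \<noteq> 0"
proof
  assume "z - inverse z = 0"
  then have "cmod z * cmod z = 1"
    using assms(1) by (metis norm_mult norm_one right_inverse right_minus_eq)
  then have "(cmod z - 1) * (cmod z + 1) = 0"
    by (simp add: algebra_simps)
  then show False
    using assms(2) norm_ge_zero[of z] by auto
qed

lemma dist_diag_scaled_sysQ:
  fixes t a b :: complex
  assumes t: "cmod t \<le> 1"
  defines "W \<equiv> 2 * cmod a + 2 * cmod b + 2 * cmod (a * b)"
  shows "dist_diag (t, (t - 1) * a, t * b, 1 + (t - 1) * a * b) t 1 \<le> W"
    and "dist_diag (1 + (t - 1) * a * b, - ((t - 1) * a), - (t * b), t) 1 t \<le> W"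
    and "dist_diag (1, (1 - t) * a, b, t + (1 - t) * a * b) 1 t \<le> W"
    and "dist_diag (t + (1 - t) * a * b, - ((1 - t) * a), - b, 1) t 1 \<le> W"
proof -
  have "cmod (t - 1) \<le> 2" "cmod (1 - t) \<le> 2"
    using norm_triangle_ineq4[of t 1] norm_triangle_ineq4[of 1 t] t by auto
  then have le: "cmod (t - 1) * cmod x \<le> 2 * cmod x" "cmod (1 - t) * cmod x \<le> 2 * cmod x"
    "cmod t * cmod x \<le> cmod x" for x
    using t by (auto intro: mult_right_mono mult_left_le_one_le)
  note nonneg = norm_ge_zero[of a] norm_ge_zero[of b] norm_ge_zero[of "a * b"]
  show "dist_diag (t, (t - 1) * a, t * b, 1 + (t - 1) * a * b) t 1 \<le> W"
    using le[of a] le[of b] le[of "a * b"] nonneg by (simp add: dist_diag_def W_def norm_mult mult.assoc; linarith)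
  show "dist_diag (1 + (t - 1) * a * b, - ((t - 1) * a), - (t * b), t) 1 t \<le> W"
    using le[of a] le[of b] le[of "a * b"] nonneg by (simp add: dist_diag_def W_def norm_mult mult.assoc; linarith)
  show "dist_diag (1, (1 - t) * a, b, t + (1 - t) * a * b) 1 t \<le> W"
    using le[of a] le[of b] le[of "a * b"] nonneg by (simp add: dist_diag_def W_def norm_mult mult.assoc; linarith)
  show "dist_diag (t + (1 - t) * a * b, - ((1 - t) * a), - b, 1) t 1 \<le> W"
    using le[of a] le[of b] le[of "a * b"] nonneg by (simp add: dist_diag_def W_def norm_mult mult.assoc; linarith)
qed

lemma gauge_U_identity:
  fixes z qn rn rn1 Dm1 Em1 :: complex
  assumes "1 - qn * rn \<noteq> 0" "1 + qn * rn1 \<noteq> 0" "Dm1 \<noteq> 0" "Em1 \<noteq> 0" "z \<noteq> 0"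
  shows "mat_mult (z * Em1, 0, - z * rn * Dm1, (z - inverse z) * Dm1)
      (z, (z - inverse z) * qn, z * rn, inverse z + (z - inverse z) * qn * rn) =
    mat_mult (z, z * (qn * Em1 / (Dm1 * (1 - qn * rn))),
        inverse z * ((- rn + rn1 - qn * rn * rn1) * Dm1 / (Em1 * (1 + qn * rn1))), inverse z)
      (z * (Em1 * (1 + qn * rn1)), 0, - z * rn1 * (Dm1 * (1 - qn * rn)), (z - inverse z) * (Dm1 * (1 - qn * rn)))"
  using assms unfolding mat_mult_def by (simp add: prod_eq_iff) (simp_all add: field_simps)

lemma gauge_P_identity:
  fixes z qn qn1 rn rn1 Dn Em1 :: complex
  assumes "1 - qn1 * rn1 \<noteq> 0" "1 + qn * rn1 \<noteq> 0" "Em1 \<noteq> 0" "Dn \<noteq> 0" "z \<noteq> 0"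
  shows "mat_mult (Em1 * (1 - qn * rn), Em1 * qn, - Dn * rn, Dn)
      (z, (z - inverse z) * qn, z * rn, inverse z + (z - inverse z) * qn * rn) =
    mat_mult (z, z * ((qn - qn1 - qn * qn1 * rn1) * Em1 / (Dn * (1 - qn1 * rn1))),
        inverse z * (rn1 * Dn / (Em1 * (1 + qn * rn1))), inverse z)
      ((Em1 * (1 + qn * rn1)) * (1 - qn1 * rn1), (Em1 * (1 + qn * rn1)) * qn1,
        - (Dn * (1 - qn1 * rn1)) * rn1, Dn * (1 - qn1 * rn1))"
  using assms unfolding mat_mult_def by (simp add: prod_eq_iff) (simp_all add: field_simps)

locale admissible_potentials =
  fixes q r :: "int \<Rightarrow> complex"
  assumes rapid_q: "rapid_decay q" and rapid_r: "rapid_decay r"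
    and D_factor_nonzero: "\<And>n. 1 - q n * r n \<noteq> 0"
    and E_factor_nonzero: "\<And>n. 1 + q n * r (n + 1) \<noteq> 0"
begin

lemma q_tendsto_0: "(q \<longlongrightarrow> 0) at_top" "(q \<longlongrightarrow> 0) at_bot"
  and r_tendsto_0: "(r \<longlongrightarrow> 0) at_top" "(r \<longlongrightarrow> 0) at_bot"
  using rapid_decay_tendsto_0[OF rapid_q] rapid_decay_tendsto_0[OF rapid_r] by auto

lemma r_shift_tendsto_0: "((\<lambda>n. r (n + 1)) \<longlongrightarrow> 0) at_top" "((\<lambda>n. r (n + 1)) \<longlongrightarrow> 0) at_bot"
  using r_tendsto_0 by (simp_all add: tendsto_shift_at_top tendsto_shift_at_bot)

definition weight :: "int \<Rightarrow> real" where
  "weight n = 2 * cmod (q n) + 2 * cmod (r n) + 2 * cmod (q n * r n)"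

lemma summable_weight: "summable (\<lambda>i. weight (n + int i))" "summable (\<lambda>i. weight (n - int i))"
proof -
  note decay = rapid_decay_imp_quadratic_decay[OF rapid_q] rapid_decay_imp_quadratic_decay[OF rapid_r]
    quadratic_decay_mult[OF rapid_decay_imp_quadratic_decay[OF rapid_q] r_tendsto_0]
  note summable = summable_if_quadratic_decay[OF decay(1)] summable_if_quadratic_decay[OF decay(2)]
    summable_if_quadratic_decay[OF decay(3)]
  show "summable (\<lambda>i. weight (n + int i))" "summable (\<lambda>i. weight (n - int i))"
    unfolding weight_def by (intro summable_add summable_mult summable)+
qed

lemma summable_weight_reflected:
  "summable (\<lambda>i. weight (- (n + int i) - 1))" "summable (\<lambda>i. weight (- (n - int i) - 1))"
  using summable_weight[of "- n - 1"] by (simp_all add: algebra_simps)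

lemma mat_det_sysQ: "z \<noteq> 0 \<Longrightarrow> mat_det (sysQ q r z n) = 1"
  by (simp add: mat_det_def sysQ_def field_simps)

lemma reflect_sysQ:
  assumes "z \<noteq> 0"
  shows "reflect (sysQ q r) z n = (inverse z + (z - inverse z) * q (- n - 1) * r (- n - 1),
    - ((z - inverse z) * q (- n - 1)), - (z * r (- n - 1)), z)"
  using mat_det_sysQ[OF assms, of "- n - 1"] by (simp add: reflect_def mat_inv_def mat_scale_def sysQ_def)

lemma mat_scale_sysQ:
  assumes "z \<noteq> 0"
  shows "mat_scale z (sysQ q r z n) = (z\<^sup>2, (z\<^sup>2 - 1) * q n, z\<^sup>2 * r n, 1 + (z\<^sup>2 - 1) * q n * r n)"
    and "mat_scale z (reflect (sysQ q r) z n) =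
      (1 + (z\<^sup>2 - 1) * q (- n - 1) * r (- n - 1), - ((z\<^sup>2 - 1) * q (- n - 1)), - (z\<^sup>2 * r (- n - 1)), z\<^sup>2)"
    and "mat_scale (1 / z) (sysQ q r z n) =
      (1, (1 - (1 / z)\<^sup>2) * q n, r n, (1 / z)\<^sup>2 + (1 - (1 / z)\<^sup>2) * q n * r n)"
    and "mat_scale (1 / z) (reflect (sysQ q r) z n) =
      ((1 / z)\<^sup>2 + (1 - (1 / z)\<^sup>2) * q (- n - 1) * r (- n - 1), - ((1 - (1 / z)\<^sup>2) * q (- n - 1)), - r (- n - 1), 1)"
  using assms unfolding reflect_sysQ[OF assms]
  by (simp_all add: mat_scale_def sysQ_def field_simps power2_eq_square)

lemma jost_psi_sysQ:
  assumes "z \<noteq> 0" "cmod z \<le> 1"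
  shows "\<exists>!X. normalised_sol (sysQ q r) z at_top (\<lambda>n. z powi (- n)) (0, 1) X"
    and "normalised_sol (sysQ q r) z at_top (\<lambda>n. z powi (- n)) (0, 1) (jost_psi (sysQ q r) z)"
    and "\<exists>C. eventually (\<lambda>n. norm (vec_scale (z powi (- n)) (jost_psi (sysQ q r) z n)) \<le> C) at_bot"
    and "\<exists>L. ((\<lambda>n. z powi (- n) * snd (jost_psi (sysQ q r) z n)) \<longlongrightarrow> L) at_bot"
proof -
  have t: "cmod (z\<^sup>2) \<le> 1"
    using assms by (simp add: norm_power power_le_one)
  have dist: "dist_diag (mat_scale z (sysQ q r z n)) (z\<^sup>2) 1 \<le> weight n" for n
    unfolding mat_scale_sysQ(1)[OF assms(1)] weight_def by (rule dist_diag_scaled_sysQ(1)[OF t])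
  have \<sigma>: "z powi (- n) \<noteq> 0" "z powi (- n) = z * z powi (- (n + 1))" for n
    using assms(1) by (simp, rule power_int_minus_rec)
  note N = normalised_sol_at_top_snd[where M = "sysQ q r" and z = z and \<rho> = z and w = weight and d = "z\<^sup>2"
      and \<sigma> = "\<lambda>n. z powi (- n)",
      OF dist t summable_weight \<sigma>]
  show ex1: "\<exists>!X. normalised_sol (sysQ q r) z at_top (\<lambda>n. z powi (- n)) (0, 1) X"
    by (rule N(1))
  show \<psi>: "normalised_sol (sysQ q r) z at_top (\<lambda>n. z powi (- n)) (0, 1) (jost_psi (sysQ q r) z)"
    unfolding jost_psi_eq by (rule theI'[OF ex1])
  show "\<exists>C. eventually (\<lambda>n. norm (vec_scale (z powi (- n)) (jost_psi (sysQ q r) z n)) \<le> C) at_bot"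
    "\<exists>L. ((\<lambda>n. z powi (- n) * snd (jost_psi (sysQ q r) z n)) \<longlongrightarrow> L) at_bot"
    by (rule N(2)[OF \<psi>], rule N(3)[OF \<psi>])
qed

lemma jost_psibar_sysQ:
  assumes "z \<noteq> 0" "cmod z \<ge> 1"
  shows "\<exists>!X. normalised_sol (sysQ q r) z at_top (\<lambda>n. z powi n) (1, 0) X"
    and "normalised_sol (sysQ q r) z at_top (\<lambda>n. z powi n) (1, 0) (jost_psibar (sysQ q r) z)"
    and "\<exists>C. eventually (\<lambda>n. norm (vec_scale (z powi n) (jost_psibar (sysQ q r) z n)) \<le> C) at_bot"
    and "\<exists>L. ((\<lambda>n. z powi n * fst (jost_psibar (sysQ q r) z n)) \<longlongrightarrow> L) at_bot"
proof -
  have t: "cmod ((1 / z)\<^sup>2) \<le> 1"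
    using assms by (simp add: norm_power power_le_one norm_divide divide_le_eq_1)
  have dist: "dist_diag (mat_scale (1 / z) (sysQ q r z n)) 1 ((1 / z)\<^sup>2) \<le> weight n" for n
    unfolding mat_scale_sysQ(3)[OF assms(1)] weight_def by (rule dist_diag_scaled_sysQ(3)[OF t])
  have \<sigma>: "z powi n \<noteq> 0" "z powi n = 1 / z * z powi (n + 1)" for n
    using assms(1) by (simp, rule power_int_rec)
  note N = normalised_sol_at_top_fst[where M = "sysQ q r" and z = z and \<rho> = "1 / z" and w = weight
      and d = "(1 / z)\<^sup>2" and \<sigma> = "\<lambda>n. z powi n", OF dist t summable_weight \<sigma>]
  show ex1: "\<exists>!X. normalised_sol (sysQ q r) z at_top (\<lambda>n. z powi n) (1, 0) X"
    by (rule N(1))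
  show \<psi>: "normalised_sol (sysQ q r) z at_top (\<lambda>n. z powi n) (1, 0) (jost_psibar (sysQ q r) z)"
    unfolding jost_psibar_eq by (rule theI'[OF ex1])
  show "\<exists>C. eventually (\<lambda>n. norm (vec_scale (z powi n) (jost_psibar (sysQ q r) z n)) \<le> C) at_bot"
    "\<exists>L. ((\<lambda>n. z powi n * fst (jost_psibar (sysQ q r) z n)) \<longlongrightarrow> L) at_bot"
    by (rule N(2)[OF \<psi>], rule N(3)[OF \<psi>])
qed

lemma jost_phi_sysQ:
  assumes "z \<noteq> 0" "cmod z \<le> 1"
  shows "\<exists>!X. normalised_sol (sysQ q r) z at_bot (\<lambda>n. z powi n) (1, 0) X"
    and "normalised_sol (sysQ q r) z at_bot (\<lambda>n. z powi n) (1, 0) (jost_phi (sysQ q r) z)"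
    and "\<exists>C. eventually (\<lambda>n. norm (vec_scale (z powi n) (jost_phi (sysQ q r) z n)) \<le> C) at_top"
    and "\<exists>L. ((\<lambda>n. z powi n * fst (jost_phi (sysQ q r) z n)) \<longlongrightarrow> L) at_top"
proof -
  have t: "cmod (z\<^sup>2) \<le> 1"
    using assms by (simp add: norm_power power_le_one)
  have det: "mat_det (sysQ q r z n) \<noteq> 0" for n
    using mat_det_sysQ[OF assms(1)] by simp
  have dist: "dist_diag (mat_scale z (reflect (sysQ q r) z m)) 1 (z\<^sup>2) \<le> weight (- m - 1)" for m
    unfolding mat_scale_sysQ(2)[OF assms(1)] weight_def by (rule dist_diag_scaled_sysQ(2)[OF t])
  have \<sigma>: "z powi (- m) \<noteq> 0" "z powi (- m) = z * z powi (- (m + 1))" for m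
    using assms(1) by (simp, rule power_int_minus_rec)
  note N = normalised_sol_at_top_fst[where M = "reflect (sysQ q r)" and z = z and \<rho> = z
      and w = "\<lambda>m. weight (- m - 1)" and d = "z\<^sup>2" and \<sigma> = "\<lambda>m. z powi (- m)",
      OF dist t summable_weight_reflected \<sigma>]
  show ex1: "\<exists>!X. normalised_sol (sysQ q r) z at_bot (\<lambda>n. z powi n) (1, 0) X"
    by (rule ex1_normalised_sol_reflect[where M = "sysQ q r" and z = z and \<sigma> = "\<lambda>n. z powi n", OF det N(1)])
  show \<phi>: "normalised_sol (sysQ q r) z at_bot (\<lambda>n. z powi n) (1, 0) (jost_phi (sysQ q r) z)"
    unfolding jost_phi_eq by (rule theI'[OF ex1])
  have \<phi>': "normalised_sol (reflect (sysQ q r)) z at_top (\<lambda>m. z powi (- m)) (1, 0) (\<lambda>m. jost_phi (sysQ q r) z (- m))"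
    using \<phi> normalised_sol_reflect[where M = "sysQ q r" and z = z and \<sigma> = "\<lambda>n. z powi n", OF det] by simp
  from N(2)[OF \<phi>'] show "\<exists>C. eventually (\<lambda>n. norm (vec_scale (z powi n) (jost_phi (sysQ q r) z n)) \<le> C) at_top"
    by (simp add: eventually_at_bot_mirror)
  from N(3)[OF \<phi>'] show "\<exists>L. ((\<lambda>n. z powi n * fst (jost_phi (sysQ q r) z n)) \<longlongrightarrow> L) at_top"
    by (simp add: tendsto_at_bot_mirror)
qed

lemma jost_phibar_sysQ:
  assumes "z \<noteq> 0" "cmod z \<ge> 1"
  shows "\<exists>!X. normalised_sol (sysQ q r) z at_bot (\<lambda>n. z powi (- n)) (0, 1) X"
    and "normalised_sol (sysQ q r) z at_bot (\<lambda>n. z powi (- n)) (0, 1) (jost_phibar (sysQ q r) z)"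
    and "\<exists>C. eventually (\<lambda>n. norm (vec_scale (z powi (- n)) (jost_phibar (sysQ q r) z n)) \<le> C) at_top"
    and "\<exists>L. ((\<lambda>n. z powi (- n) * snd (jost_phibar (sysQ q r) z n)) \<longlongrightarrow> L) at_top"
proof -
  have t: "cmod ((1 / z)\<^sup>2) \<le> 1"
    using assms by (simp add: norm_power power_le_one norm_divide divide_le_eq_1)
  have det: "mat_det (sysQ q r z n) \<noteq> 0" for n
    using mat_det_sysQ[OF assms(1)] by simp
  have dist: "dist_diag (mat_scale (1 / z) (reflect (sysQ q r) z m)) ((1 / z)\<^sup>2) 1 \<le> weight (- m - 1)" for m
    unfolding mat_scale_sysQ(4)[OF assms(1)] weight_def by (rule dist_diag_scaled_sysQ(4)[OF t])
  have \<sigma>: "z powi (- (- m)) \<noteq> 0" "z powi (- (- m)) = 1 / z * z powi (- (- (m + 1)))" for m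
    using assms(1) by (simp, simp only: minus_minus, rule power_int_rec)
  note N = normalised_sol_at_top_snd[where M = "reflect (sysQ q r)" and z = z and \<rho> = "1 / z"
      and w = "\<lambda>m. weight (- m - 1)" and d = "(1 / z)\<^sup>2" and \<sigma> = "\<lambda>m. z powi (- (- m))",
      OF dist t summable_weight_reflected \<sigma>]
  show ex1: "\<exists>!X. normalised_sol (sysQ q r) z at_bot (\<lambda>n. z powi (- n)) (0, 1) X"
    by (rule ex1_normalised_sol_reflect[where M = "sysQ q r" and z = z and \<sigma> = "\<lambda>n. z powi (- n)", OF det N(1)])
  show \<phi>: "normalised_sol (sysQ q r) z at_bot (\<lambda>n. z powi (- n)) (0, 1) (jost_phibar (sysQ q r) z)"
    unfolding jost_phibar_eq by (rule theI'[OF ex1])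
  have \<phi>': "normalised_sol (reflect (sysQ q r)) z at_top (\<lambda>m. z powi (- (- m))) (0, 1) (\<lambda>m. jost_phibar (sysQ q r) z (- m))"
    using \<phi> normalised_sol_reflect[where M = "sysQ q r" and z = z and \<sigma> = "\<lambda>n. z powi (- n)", OF det] by simp
  from N(2)[OF \<phi>'] show "\<exists>C. eventually (\<lambda>n. norm (vec_scale (z powi (- n)) (jost_phibar (sysQ q r) z n)) \<le> C) at_top"
    by (simp add: eventually_at_bot_mirror)
  from N(3)[OF \<phi>'] show "\<exists>L. ((\<lambda>n. z powi (- n) * snd (jost_phibar (sysQ q r) z n)) \<longlongrightarrow> L) at_top"
    by (simp add: tendsto_at_bot_mirror)
qed

lemma trans_r_eq_trans_l_sysQ:
  assumes "z \<noteq> 0" "cmod z \<le> 1"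
  shows "trans_r (sysQ q r) z = trans_l (sysQ q r) z"
proof -
  define \<psi> where "\<psi> = jost_psi (sysQ q r) z"
  define \<phi> where "\<phi> = jost_phi (sysQ q r) z"
  note psi = jost_psi_sysQ[OF assms, folded \<psi>_def] and phi = jost_phi_sysQ[OF assms, folded \<phi>_def]
  obtain C\<psi> L\<psi> where \<psi>_bounded: "eventually (\<lambda>n. norm (vec_scale (z powi (- n)) (\<psi> n)) \<le> C\<psi>) at_bot"
    and \<psi>_lim: "((\<lambda>n. z powi (- n) * snd (\<psi> n)) \<longlongrightarrow> L\<psi>) at_bot"
    using psi(3,4) by blast
  obtain C\<phi> L\<phi> where \<phi>_bounded: "eventually (\<lambda>n. norm (vec_scale (z powi n) (\<phi> n)) \<le> C\<phi>) at_top"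
    and \<phi>_lim: "((\<lambda>n. z powi n * fst (\<phi> n)) \<longlongrightarrow> L\<phi>) at_top"
    using phi(3,4) by blast
  have \<sigma>\<tau>: "z powi n * z powi (- n) = 1" for n
    using assms(1) by (simp add: power_int_minus)
  define W where "W = vec_det (\<phi> 0) (\<psi> 0)"
  have W: "vec_det (\<phi> n) (\<psi> n) = W" for n
    unfolding W_def
    using psi(2) phi(2) mat_det_sysQ[OF assms(1)] unfolding normalised_sol_def
    by (intro vec_det_sol_const) auto
  have "((\<lambda>n. vec_det (\<phi> n) (\<psi> n)) \<longlongrightarrow> L\<phi>) at_top"
    using psi(2) by (intro vec_det_tendsto(2)[OF \<sigma>\<tau> _ \<phi>_bounded \<phi>_lim]) (simp add: normalised_sol_def)
  moreover have "((\<lambda>n. vec_det (\<phi> n) (\<psi> n)) \<longlongrightarrow> L\<psi>) at_bot"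
    using phi(2) by (intro vec_det_tendsto(1)[OF \<sigma>\<tau> _ \<psi>_bounded \<psi>_lim]) (simp add: normalised_sol_def)
  ultimately have "L\<phi> = L\<psi>"
    unfolding W by (simp add: tendsto_const_iff)
  moreover have "Lim at_bot (\<lambda>n. z powi (- n) * snd (\<psi> n)) = L\<psi>" "Lim at_top (\<lambda>n. z powi n * fst (\<phi> n)) = L\<phi>"
    using \<psi>_lim \<phi>_lim by (auto intro: tendsto_Lim)
  ultimately show ?thesis
    by (simp add: trans_l_def trans_r_def \<psi>_def \<phi>_def)
qed

lemma transbar_r_eq_transbar_l_sysQ:
  assumes "z \<noteq> 0" "cmod z \<ge> 1"
  shows "transbar_r (sysQ q r) z = transbar_l (sysQ q r) z"
proof -
  define \<psi> where "\<psi> = jost_psibar (sysQ q r) z"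
  define \<phi> where "\<phi> = jost_phibar (sysQ q r) z"
  note psi = jost_psibar_sysQ[OF assms, folded \<psi>_def] and phi = jost_phibar_sysQ[OF assms, folded \<phi>_def]
  obtain C\<psi> L\<psi> where \<psi>_bounded: "eventually (\<lambda>n. norm (vec_scale (z powi n) (\<psi> n)) \<le> C\<psi>) at_bot"
    and \<psi>_lim: "((\<lambda>n. z powi n * fst (\<psi> n)) \<longlongrightarrow> L\<psi>) at_bot"
    using psi(3,4) by blast
  obtain C\<phi> L\<phi> where \<phi>_bounded: "eventually (\<lambda>n. norm (vec_scale (z powi (- n)) (\<phi> n)) \<le> C\<phi>) at_top"
    and \<phi>_lim: "((\<lambda>n. z powi (- n) * snd (\<phi> n)) \<longlongrightarrow> L\<phi>) at_top"
    using phi(3,4) by blast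
  have \<sigma>\<tau>: "z powi n * z powi (- n) = 1" for n
    using assms(1) by (simp add: power_int_minus)
  define W where "W = vec_det (\<psi> 0) (\<phi> 0)"
  have W: "vec_det (\<psi> n) (\<phi> n) = W" for n
    unfolding W_def
    using psi(2) phi(2) mat_det_sysQ[OF assms(1)] unfolding normalised_sol_def
    by (intro vec_det_sol_const) auto
  have "((\<lambda>n. vec_det (\<psi> n) (\<phi> n)) \<longlongrightarrow> L\<phi>) at_top"
    using psi(2) by (intro vec_det_tendsto(1)[OF \<sigma>\<tau> _ \<phi>_bounded \<phi>_lim]) (simp add: normalised_sol_def)
  moreover have "((\<lambda>n. vec_det (\<psi> n) (\<phi> n)) \<longlongrightarrow> L\<psi>) at_bot"
    using phi(2) by (intro vec_det_tendsto(2)[OF \<sigma>\<tau> _ \<psi>_bounded \<psi>_lim]) (simp add: normalised_sol_def)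
  ultimately have "L\<phi> = L\<psi>"
    unfolding W by (simp add: tendsto_const_iff)
  moreover have "Lim at_bot (\<lambda>n. z powi n * fst (\<psi> n)) = L\<psi>" "Lim at_top (\<lambda>n. z powi (- n) * snd (\<phi> n)) = L\<phi>"
    using \<psi>_lim \<phi>_lim by (auto intro: tendsto_Lim)
  ultimately show ?thesis
    by (simp add: transbar_l_def transbar_r_def \<psi>_def \<phi>_def)
qed

lemma convergent_bi_product_D: "convergent_bi_product (\<lambda>j. 1 - q j * r j)"
  and convergent_bi_product_E: "convergent_bi_product (\<lambda>j. 1 + q j * r (j + 1))"
proof -
  have "quadratic_decay (\<lambda>n. q n * r n)" "quadratic_decay (\<lambda>n. q n * r (n + 1))"
    using rapid_decay_imp_quadratic_decay[OF rapid_q] r_tendsto_0 r_shift_tendsto_0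
    by (auto intro: quadratic_decay_mult)
  note summable = summable_if_quadratic_decay[OF this(1)] summable_if_quadratic_decay[OF this(2)]
  show "convergent_bi_product (\<lambda>j. 1 - q j * r j)" "convergent_bi_product (\<lambda>j. 1 + q j * r (j + 1))"
    using D_factor_nonzero E_factor_nonzero summable by unfold_locales simp_all
qed

definition D_plus where "D_plus = Lim at_top (Dprod q r)"

definition D_minus where "D_minus = Lim at_bot (Dprod q r)"

definition E_plus where "E_plus = Lim at_top (Eprod q r)"

definition E_minus where "E_minus = Lim at_bot (Eprod q r)"

lemma Dprod_nonzero: "Dprod q r n \<noteq> 0"
  and Dprod_rec: "Dprod q r n = Dprod q r (n - 1) * (1 - q n * r n)"
  and Eprod_nonzero: "Eprod q r n \<noteq> 0"
  and Eprod_rec: "Eprod q r n = Eprod q r (n - 1) * (1 + q n * r (n + 1))"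
proof -
  have D: "Dprod q r = prod_from_bot (\<lambda>j. 1 - q j * r j)" and E: "Eprod q r = prod_from_bot (\<lambda>j. 1 + q j * r (j + 1))"
    by (simp_all add: fun_eq_iff Dprod_def Eprod_def prod_from_bot_def)
  show "Dprod q r n \<noteq> 0" "Dprod q r n = Dprod q r (n - 1) * (1 - q n * r n)"
    unfolding D by (rule convergent_bi_product.prod_from_bot_nonzero convergent_bi_product.prod_from_bot_rec
        convergent_bi_product_D)+
  show "Eprod q r n \<noteq> 0" "Eprod q r n = Eprod q r (n - 1) * (1 + q n * r (n + 1))"
    unfolding E by (rule convergent_bi_product.prod_from_bot_nonzero convergent_bi_product.prod_from_bot_rec
        convergent_bi_product_E)+
qed

lemma D_E_limits:
  shows "((\<lambda>n. Dprod q r (n + k)) \<longlongrightarrow> D_plus) at_top" "((\<lambda>n. Dprod q r (n + k)) \<longlongrightarrow> D_minus) at_bot"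
    and "((\<lambda>n. Eprod q r (n + k)) \<longlongrightarrow> E_plus) at_top" "((\<lambda>n. Eprod q r (n + k)) \<longlongrightarrow> E_minus) at_bot"
    and "D_plus \<noteq> 0" "D_minus \<noteq> 0" "E_plus \<noteq> 0" "E_minus \<noteq> 0"
proof -
  have D: "Dprod q r = prod_from_bot (\<lambda>j. 1 - q j * r j)" and E: "Eprod q r = prod_from_bot (\<lambda>j. 1 + q j * r (j + 1))"
    by (simp_all add: fun_eq_iff Dprod_def Eprod_def prod_from_bot_def)
  obtain a where "a \<noteq> 0" "(Dprod q r \<longlongrightarrow> a) at_top"
    unfolding D using convergent_bi_product.prod_from_bot_tendsto_at_top[OF convergent_bi_product_D] by blast
  moreover obtain b where "b \<noteq> 0" "(Dprod q r \<longlongrightarrow> b) at_bot"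
    unfolding D using convergent_bi_product.prod_from_bot_tendsto_at_bot[OF convergent_bi_product_D] by blast
  moreover obtain c where "c \<noteq> 0" "(Eprod q r \<longlongrightarrow> c) at_top"
    unfolding E using convergent_bi_product.prod_from_bot_tendsto_at_top[OF convergent_bi_product_E] by blast
  moreover obtain d where "d \<noteq> 0" "(Eprod q r \<longlongrightarrow> d) at_bot"
    unfolding E using convergent_bi_product.prod_from_bot_tendsto_at_bot[OF convergent_bi_product_E] by blast
  moreover from calculation have "D_plus = a" "D_minus = b" "E_plus = c" "E_minus = d"
    unfolding D_plus_def D_minus_def E_plus_def E_minus_def by (auto intro: tendsto_Lim)
  ultimately show "((\<lambda>n. Dprod q r (n + k)) \<longlongrightarrow> D_plus) at_top" "((\<lambda>n. Dprod q r (n + k)) \<longlongrightarrow> D_minus) at_bot"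
    "((\<lambda>n. Eprod q r (n + k)) \<longlongrightarrow> E_plus) at_top" "((\<lambda>n. Eprod q r (n + k)) \<longlongrightarrow> E_minus) at_bot"
    "D_plus \<noteq> 0" "D_minus \<noteq> 0" "E_plus \<noteq> 0" "E_minus \<noteq> 0"
    by (simp_all add: tendsto_shift_at_top tendsto_shift_at_bot)
qed

lemma D_E_limits_shifted:
  "((\<lambda>n. Dprod q r (n - 1)) \<longlongrightarrow> D_plus) at_top" "((\<lambda>n. Dprod q r (n - 1)) \<longlongrightarrow> D_minus) at_bot"
  "((\<lambda>n. Eprod q r (n - 1)) \<longlongrightarrow> E_plus) at_top" "((\<lambda>n. Eprod q r (n - 1)) \<longlongrightarrow> E_minus) at_bot"
  using D_E_limits(1-4)[where k = "- 1"] by simp_all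

definition gauge_U :: "complex \<Rightarrow> int \<Rightarrow> mat2" where
  "gauge_U z n = (z * Eprod q r (n - 1), 0, - z * r n * Dprod q r (n - 1), (z - inverse z) * Dprod q r (n - 1))"

definition gauge_P :: "int \<Rightarrow> mat2" where
  "gauge_P n = (Eprod q r (n - 1) * (1 - q n * r n), Eprod q r (n - 1) * q n, - Dprod q r n * r n, Dprod q r n)"

lemma diagonal_gauge_U:
  assumes "z \<noteq> 0" "z - inverse z \<noteq> 0"
  shows "diagonal_gauge (sysQ q r) (sysU (pot_u q r) (pot_v q r)) z (gauge_U z)
    (z * E_plus) ((z - inverse z) * D_plus) (z * E_minus) ((z - inverse z) * D_minus)"
proof
  show "gauge_transform (sysQ q r) (sysU (pot_u q r) (pot_v q r)) z (gauge_U z)"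
    unfolding gauge_transform_def
  proof (intro allI conjI)
    fix n
    show "mat_det (gauge_U z n) \<noteq> 0"
      using assms Dprod_nonzero Eprod_nonzero by (simp add: gauge_U_def mat_det_def)
    have "mat_mult (gauge_U z n) (sysQ q r z n) =
        mat_mult (z, z * (q n * Eprod q r (n - 1) / (Dprod q r (n - 1) * (1 - q n * r n))),
          inverse z * ((- r n + r (n + 1) - q n * r n * r (n + 1)) * Dprod q r (n - 1) /
            (Eprod q r (n - 1) * (1 + q n * r (n + 1)))), inverse z)
        (z * (Eprod q r (n - 1) * (1 + q n * r (n + 1))), 0,
          - z * r (n + 1) * (Dprod q r (n - 1) * (1 - q n * r n)),
          (z - inverse z) * (Dprod q r (n - 1) * (1 - q n * r n)))"
      unfolding gauge_U_def sysQ_def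
      by (rule gauge_U_identity[OF D_factor_nonzero E_factor_nonzero Dprod_nonzero Eprod_nonzero assms(1)])
    also have "\<dots> = mat_mult (sysU (pot_u q r) (pot_v q r) z n) (gauge_U z (n + 1))"
      by (simp add: gauge_U_def sysU_def pot_u_def pot_v_def Dprod_rec[of n, symmetric] Eprod_rec[of n, symmetric])
    finally show "mat_mult (gauge_U z n) (sysQ q r z n) = mat_mult (sysU (pot_u q r) (pot_v q r) z n) (gauge_U z (n + 1))" .
  qed
  have gauge_U_eq: "gauge_U z = (\<lambda>n. (z * Eprod q r (n - 1), 0, - z * r n * Dprod q r (n - 1), (z - inverse z) * Dprod q r (n - 1)))"
    by (simp add: fun_eq_iff gauge_U_def)
  have "(gauge_U z \<longlongrightarrow> (z * E_plus, 0, - z * 0 * D_plus, (z - inverse z) * D_plus)) at_top"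
    unfolding gauge_U_eq by (intro tendsto_intros D_E_limits_shifted r_tendsto_0)
  then show "(gauge_U z \<longlongrightarrow> diag (z * E_plus) ((z - inverse z) * D_plus)) at_top"
    by (simp add: diag_def)
  have "(gauge_U z \<longlongrightarrow> (z * E_minus, 0, - z * 0 * D_minus, (z - inverse z) * D_minus)) at_bot"
    unfolding gauge_U_eq by (intro tendsto_intros D_E_limits_shifted r_tendsto_0)
  then show "(gauge_U z \<longlongrightarrow> diag (z * E_minus) ((z - inverse z) * D_minus)) at_bot"
    by (simp add: diag_def)
qed (use assms D_E_limits(5-8) in simp_all)

lemma diagonal_gauge_P:
  assumes "z \<noteq> 0"
  shows "diagonal_gauge (sysQ q r) (sysU (pot_p q r) (pot_s q r)) z gauge_P E_plus D_plus E_minus D_minus"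
proof
  show "gauge_transform (sysQ q r) (sysU (pot_p q r) (pot_s q r)) z gauge_P"
    unfolding gauge_transform_def
  proof (intro allI conjI)
    fix n
    have "mat_det (gauge_P n) = Eprod q r (n - 1) * Dprod q r n"
      by (simp add: gauge_P_def mat_det_def algebra_simps)
    then show "mat_det (gauge_P n) \<noteq> 0"
      using Dprod_nonzero Eprod_nonzero by simp
    have "mat_mult (gauge_P n) (sysQ q r z n) =
        mat_mult (z, z * ((q n - q (n + 1) - q n * q (n + 1) * r (n + 1)) * Eprod q r (n - 1) /
            (Dprod q r n * (1 - q (n + 1) * r (n + 1)))),
          inverse z * (r (n + 1) * Dprod q r n / (Eprod q r (n - 1) * (1 + q n * r (n + 1)))), inverse z)
        ((Eprod q r (n - 1) * (1 + q n * r (n + 1))) * (1 - q (n + 1) * r (n + 1)),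
          (Eprod q r (n - 1) * (1 + q n * r (n + 1))) * q (n + 1),
          - (Dprod q r n * (1 - q (n + 1) * r (n + 1))) * r (n + 1), Dprod q r n * (1 - q (n + 1) * r (n + 1)))"
      unfolding gauge_P_def sysQ_def
      by (rule gauge_P_identity[OF D_factor_nonzero E_factor_nonzero Eprod_nonzero Dprod_nonzero assms])
    also have "\<dots> = mat_mult (sysU (pot_p q r) (pot_s q r) z n) (gauge_P (n + 1))"
      using Dprod_rec[of "n + 1"] Eprod_rec[of n] by (simp add: gauge_P_def sysU_def pot_p_def pot_s_def)
    finally show "mat_mult (gauge_P n) (sysQ q r z n) = mat_mult (sysU (pot_p q r) (pot_s q r) z n) (gauge_P (n + 1))" .
  qed
  have gauge_P_eq: "gauge_P = (\<lambda>n. (Eprod q r (n - 1) * (1 - q n * r n), Eprod q r (n - 1) * q n,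
      - Dprod q r (n + 0) * r n, Dprod q r (n + 0)))"
    by (simp add: fun_eq_iff gauge_P_def)
  have "(gauge_P \<longlongrightarrow> (E_plus * (1 - 0 * 0), E_plus * 0, - D_plus * 0, D_plus)) at_top"
    unfolding gauge_P_eq by (intro tendsto_intros D_E_limits D_E_limits_shifted q_tendsto_0 r_tendsto_0)
  then show "(gauge_P \<longlongrightarrow> diag E_plus D_plus) at_top"
    by (simp add: diag_def)
  have "(gauge_P \<longlongrightarrow> (E_minus * (1 - 0 * 0), E_minus * 0, - D_minus * 0, D_minus)) at_bot"
    unfolding gauge_P_eq by (intro tendsto_intros D_E_limits D_E_limits_shifted q_tendsto_0 r_tendsto_0)
  then show "(gauge_P \<longlongrightarrow> diag E_minus D_minus) at_bot"
    by (simp add: diag_def)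
qed (use D_E_limits(5-8) in simp_all)

lemma transmission_ratios_disc:
  assumes "z \<in> ball 0 1 - {0}"
  shows "trans_l (sysU (pot_u q r) (pot_v q r)) z = D_plus / D_minus * trans_l (sysQ q r) z"
    and "trans_r (sysU (pot_u q r) (pot_v q r)) z = E_minus / E_plus * trans_l (sysQ q r) z"
    and "trans_l (sysU (pot_p q r) (pot_s q r)) z = D_plus / D_minus * trans_l (sysQ q r) z"
    and "trans_r (sysU (pot_p q r) (pot_s q r)) z = E_minus / E_plus * trans_l (sysQ q r) z"
proof -
  have z: "z \<noteq> 0" "cmod z \<le> 1" and zi: "z - inverse z \<noteq> 0"
    using assms diff_inverse_nonzero[of z] by auto
  interpret U: diagonal_gauge "sysQ q r" "sysU (pot_u q r) (pot_v q r)" z "gauge_U z"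
    "z * E_plus" "(z - inverse z) * D_plus" "z * E_minus" "(z - inverse z) * D_minus"
    by (rule diagonal_gauge_U[OF z(1) zi])
  interpret P: diagonal_gauge "sysQ q r" "sysU (pot_p q r) (pot_s q r)" z gauge_P E_plus D_plus E_minus D_minus
    by (rule diagonal_gauge_P[OF z(1)])
  note psi = jost_psi_sysQ[OF z] and phi = jost_phi_sysQ[OF z]
  obtain C\<psi> L\<psi> where \<psi>: "eventually (\<lambda>n. norm (vec_scale (z powi (- n)) (jost_psi (sysQ q r) z n)) \<le> C\<psi>) at_bot"
    "((\<lambda>n. z powi (- n) * snd (jost_psi (sysQ q r) z n)) \<longlongrightarrow> L\<psi>) at_bot"
    using psi(3,4) by blast
  obtain C\<phi> L\<phi> where \<phi>: "eventually (\<lambda>n. norm (vec_scale (z powi n) (jost_phi (sysQ q r) z n)) \<le> C\<phi>) at_top"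
    "((\<lambda>n. z powi n * fst (jost_phi (sysQ q r) z n)) \<longlongrightarrow> L\<phi>) at_top"
    using phi(3,4) by blast
  note T = trans_r_eq_trans_l_sysQ[OF z]
  show "trans_l (sysU (pot_u q r) (pot_v q r)) z = D_plus / D_minus * trans_l (sysQ q r) z"
    using U.trans_l_eq[OF psi(1) \<psi>] zi by simp
  show "trans_r (sysU (pot_u q r) (pot_v q r)) z = E_minus / E_plus * trans_l (sysQ q r) z"
    using U.trans_r_eq[OF phi(1) \<phi>] z(1) T by simp
  show "trans_l (sysU (pot_p q r) (pot_s q r)) z = D_plus / D_minus * trans_l (sysQ q r) z"
    using P.trans_l_eq[OF psi(1) \<psi>] by simp
  show "trans_r (sysU (pot_p q r) (pot_s q r)) z = E_minus / E_plus * trans_l (sysQ q r) z"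
    using P.trans_r_eq[OF phi(1) \<phi>] T by simp
qed

lemma transmission_ratios_exterior:
  assumes "z \<in> - cball 0 1"
  shows "transbar_l (sysU (pot_u q r) (pot_v q r)) z = E_plus / E_minus * transbar_l (sysQ q r) z"
    and "transbar_r (sysU (pot_u q r) (pot_v q r)) z = D_minus / D_plus * transbar_l (sysQ q r) z"
    and "transbar_l (sysU (pot_p q r) (pot_s q r)) z = E_plus / E_minus * transbar_l (sysQ q r) z"
    and "transbar_r (sysU (pot_p q r) (pot_s q r)) z = D_minus / D_plus * transbar_l (sysQ q r) z"
proof -
  have z: "z \<noteq> 0" "cmod z \<ge> 1"
    using assms by auto
  then have zi: "z - inverse z \<noteq> 0"
    using assms diff_inverse_nonzero[of z] by auto
  interpret U: diagonal_gauge "sysQ q r" "sysU (pot_u q r) (pot_v q r)" z "gauge_U z"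
    "z * E_plus" "(z - inverse z) * D_plus" "z * E_minus" "(z - inverse z) * D_minus"
    by (rule diagonal_gauge_U[OF z(1) zi])
  interpret P: diagonal_gauge "sysQ q r" "sysU (pot_p q r) (pot_s q r)" z gauge_P E_plus D_plus E_minus D_minus
    by (rule diagonal_gauge_P[OF z(1)])
  note psi = jost_psibar_sysQ[OF z] and phi = jost_phibar_sysQ[OF z]
  obtain C\<psi> L\<psi> where \<psi>: "eventually (\<lambda>n. norm (vec_scale (z powi n) (jost_psibar (sysQ q r) z n)) \<le> C\<psi>) at_bot"
    "((\<lambda>n. z powi n * fst (jost_psibar (sysQ q r) z n)) \<longlongrightarrow> L\<psi>) at_bot"
    using psi(3,4) by blast
  obtain C\<phi> L\<phi> where \<phi>: "eventually (\<lambda>n. norm (vec_scale (z powi (- n)) (jost_phibar (sysQ q r) z n)) \<le> C\<phi>) at_top"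
    "((\<lambda>n. z powi (- n) * snd (jost_phibar (sysQ q r) z n)) \<longlongrightarrow> L\<phi>) at_top"
    using phi(3,4) by blast
  note T = transbar_r_eq_transbar_l_sysQ[OF z]
  show "transbar_l (sysU (pot_u q r) (pot_v q r)) z = E_plus / E_minus * transbar_l (sysQ q r) z"
    using U.transbar_l_eq[OF psi(1) \<psi>] z(1) by simp
  show "transbar_r (sysU (pot_u q r) (pot_v q r)) z = D_minus / D_plus * transbar_l (sysQ q r) z"
    using U.transbar_r_eq[OF phi(1) \<phi>] zi T by simp
  show "transbar_l (sysU (pot_p q r) (pot_s q r)) z = E_plus / E_minus * transbar_l (sysQ q r) z"
    using P.transbar_l_eq[OF psi(1) \<psi>] by simp
  show "transbar_r (sysU (pot_p q r) (pot_s q r)) z = D_minus / D_plus * transbar_l (sysQ q r) z"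
    using P.transbar_r_eq[OF phi(1) \<phi>] T by simp
qed

end

lemma pole_zorder_eq_if_cmult:
  fixes F T :: "complex \<Rightarrow> complex"
  assumes "open S" "z0 \<in> S" "\<And>z. z \<in> S \<Longrightarrow> F z = \<kappa> * T z" "\<kappa> \<noteq> 0"
  shows "(is_pole F z0 \<longleftrightarrow> is_pole T z0) \<and> (is_pole T z0 \<longrightarrow> zorder F z0 = zorder T z0)"
proof -
  have ev: "eventually (\<lambda>z. F z = \<kappa> * T z) (at z0)"
    using eventually_at_in_open'[OF assms(1,2)] by eventually_elim (rule assms(3))
  have "is_pole F z0 \<longleftrightarrow> is_pole T z0"
    using is_pole_cong[OF ev refl] assms(4) by simp
  moreover have "zorder F z0 = zorder T z0"
    using zorder_cong[OF ev refl] zorder_cmult[OF assms(4)] by simp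
  ultimately show ?thesis
    by simp
qed

theorem corollary3p5:
  fixes q r :: "int \<Rightarrow> complex"
  assumes "rapid_decay q" and "rapid_decay r"
    and "\<And>n. 1 - q n * r n \<noteq> 0"
    and "\<And>n. 1 + q n * r (n+1) \<noteq> 0"
  defines "T \<equiv> trans_l (sysQ q r)"
    and "Tul \<equiv> trans_l (sysU (pot_u q r) (pot_v q r))"
    and "Tur \<equiv> trans_r (sysU (pot_u q r) (pot_v q r))"
    and "Tpl \<equiv> trans_l (sysU (pot_p q r) (pot_s q r))"
    and "Tpr \<equiv> trans_r (sysU (pot_p q r) (pot_s q r))"
    and "Tb \<equiv> transbar_l (sysQ q r)"
    and "Tbul \<equiv> transbar_l (sysU (pot_u q r) (pot_v q r))"
    and "Tbur \<equiv> transbar_r (sysU (pot_u q r) (pot_v q r))"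
    and "Tbpl \<equiv> transbar_l (sysU (pot_p q r) (pot_s q r))"
    and "Tbpr \<equiv> transbar_r (sysU (pot_p q r) (pot_s q r))"
  shows "(\<forall>z0. 0 < norm z0 \<and> norm z0 < 1 \<longrightarrow>
           (\<forall>F\<in>{Tul, Tur, Tpl, Tpr}. (is_pole F z0 \<longleftrightarrow> is_pole T z0) \<and>
              (is_pole T z0 \<longrightarrow> zorder F z0 = zorder T z0))) \<and>
         (\<forall>z0. 1 < norm z0 \<longrightarrow>
           (\<forall>F\<in>{Tbul, Tbur, Tbpl, Tbpr}. (is_pole F z0 \<longleftrightarrow> is_pole Tb z0) \<and>
              (is_pole Tb z0 \<longrightarrow> zorder F z0 = zorder Tb z0)))"
proof -
  interpret admissible_potentials q r
    using assms(1-4) by unfold_locales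
  have "open (ball (0::complex) 1 - {0})" "open (- cball (0::complex) 1)"
    by auto
  note disc = pole_zorder_eq_if_cmult[OF this(1)] and exterior = pole_zorder_eq_if_cmult[OF this(2)]
  show ?thesis
    unfolding T_def Tul_def Tur_def Tpl_def Tpr_def Tb_def Tbul_def Tbur_def Tbpl_def Tbpr_def
    using disc[OF _ transmission_ratios_disc(1)] disc[OF _ transmission_ratios_disc(2)]
      disc[OF _ transmission_ratios_disc(3)] disc[OF _ transmission_ratios_disc(4)]
      exterior[OF _ transmission_ratios_exterior(1)] exterior[OF _ transmission_ratios_exterior(2)]
      exterior[OF _ transmission_ratios_exterior(3)] exterior[OF _ transmission_ratios_exterior(4)]
      D_E_limits(5-8)
    by auto
qed

end
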